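(* Let $H$ be a cocommutative Hopf algebra and $\mathcal{A}$ an $H$-bimodule algebra. Then the L-R-smash product $\mathcal{A}\natural H$ is isomorphic as an algebra to the smash product $\mathcal{A}\# H$, where $\mathcal{A}$ is regarded as a left $H$-module algebra via $h\rightarrow\varphi=h_1\cdot\varphi\cdot S(h_2)$.
   Context: Work over a field $k$, $H$ an ordinary Hopf algebra with antipode $S$, $\Delta(h)=h_1\otimes h_2$. An $H$-bimodule algebra is an associative unital algebra $\mathcal{A}$ which is an $H$-bimodule (actions $h\cdot\varphi$, $\varphi\cdot h$) with $h\cdot(\varphi\psi)=(h_1\cdot\varphi)(h_2\cdot\psi)$, $(\varphi\psi)\cdot h=(\varphi\cdot h_1)(\psi\cdot h_2)$, $h\cdot1=1\cdot h=\varepsilon(h)1$. The L-R-smash product $\mathcal{A}\natural H$ is $\mathcal{A}\otimes H$ with product $(\varphi\natural h)(\psi\natural h')=(\varphi\cdot h'_2)(h_1\cdot\psi)\natural h_2h'_1$ and unit $1\natural1$. For a left $H$-module algebra $\mathcal{A}$ with action $\rightarrow$, the smash product $\mathcal{A}\# H$ is $\mathcal{A}\otimes H$ with product $(\varphi\# h)(\varphi'\# h')=\varphi(h_1\rightarrow\varphi')\# h_2h'$. *)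

theory Defs
  imports Complex_Main "HOL-Library.Poly_Mapping"
begin

definition k_algebra :: "('k::field \<Rightarrow> 'r::ring_1 \<Rightarrow> 'r) \<Rightarrow> bool" where
  "k_algebra sc \<longleftrightarrow> vector_space sc \<and>
     (\<forall>c x y. sc c (x * y) = sc c x * y \<and> sc c (x * y) = x * sc c y)"

text \<open>An element of \<open>X \<otimes> Y\<close> is written as a finite list of pairs \<open>[(x_i,y_i)]\<close>
  standing for \<open>\<Sum> x_i \<otimes> y_i\<close>. Two such lists are equal in the tensor product
  iff their difference in the free k-vector space on \<open>X \<times> Y\<close> lies in the span of
  the bilinearity relations (the standard construction of \<open>X \<otimes>\<^sub>k Y\<close>).\<close>

definition fscale :: "'k::comm_ring_1 \<Rightarrow> ('i \<Rightarrow>\<^sub>0 'k) \<Rightarrow> ('i \<Rightarrow>\<^sub>0 'k)" where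
  "fscale c p = Poly_Mapping.map (\<lambda>a. c * a) p"

definition tfree :: "'i list \<Rightarrow> ('i \<Rightarrow>\<^sub>0 'k::comm_ring_1)" where
  "tfree xs = sum_list (map (\<lambda>p. Poly_Mapping.single p 1) xs)"

definition trel2 :: "('k::field \<Rightarrow> 'x::ab_group_add \<Rightarrow> 'x) \<Rightarrow> ('k \<Rightarrow> 'y::ab_group_add \<Rightarrow> 'y)
    \<Rightarrow> (('x \<times> 'y) \<Rightarrow>\<^sub>0 'k) set" where
  "trel2 sX sY =
     {Poly_Mapping.single (x + x', y) 1 - Poly_Mapping.single (x, y) 1 - Poly_Mapping.single (x', y) 1
        | x x' y. True}
   \<union> {Poly_Mapping.single (x, y + y') 1 - Poly_Mapping.single (x, y) 1 - Poly_Mapping.single (x, y') 1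
        | x y y'. True}
   \<union> {Poly_Mapping.single (sX c x, y) 1 - fscale c (Poly_Mapping.single (x, y) 1) | c x y. True}
   \<union> {Poly_Mapping.single (x, sY c y) 1 - fscale c (Poly_Mapping.single (x, y) 1) | c x y. True}"

definition teq2 :: "('k::field \<Rightarrow> 'x::ab_group_add \<Rightarrow> 'x) \<Rightarrow> ('k \<Rightarrow> 'y::ab_group_add \<Rightarrow> 'y)
    \<Rightarrow> ('x \<times> 'y) list \<Rightarrow> ('x \<times> 'y) list \<Rightarrow> bool" where
  "teq2 sX sY xs ys \<longleftrightarrow>
     (tfree xs - tfree ys :: ('x \<times> 'y) \<Rightarrow>\<^sub>0 'k) \<in> module.span fscale (trel2 sX sY)"

definition trel3 :: "('k::field \<Rightarrow> 'x::ab_group_add \<Rightarrow> 'x) \<Rightarrow> ('k \<Rightarrow> 'y::ab_group_add \<Rightarrow> 'y)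
    \<Rightarrow> ('k \<Rightarrow> 'z::ab_group_add \<Rightarrow> 'z) \<Rightarrow> (('x \<times> 'y \<times> 'z) \<Rightarrow>\<^sub>0 'k) set" where
  "trel3 sX sY sZ =
     {Poly_Mapping.single (x + x', y, z) 1 - Poly_Mapping.single (x, y, z) 1
        - Poly_Mapping.single (x', y, z) 1 | x x' y z. True}
   \<union> {Poly_Mapping.single (x, y + y', z) 1 - Poly_Mapping.single (x, y, z) 1
        - Poly_Mapping.single (x, y', z) 1 | x y y' z. True}
   \<union> {Poly_Mapping.single (x, y, z + z') 1 - Poly_Mapping.single (x, y, z) 1
        - Poly_Mapping.single (x, y, z') 1 | x y z z'. True}
   \<union> {Poly_Mapping.single (sX c x, y, z) 1 - fscale c (Poly_Mapping.single (x, y, z) 1) | c x y z. True}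
   \<union> {Poly_Mapping.single (x, sY c y, z) 1 - fscale c (Poly_Mapping.single (x, y, z) 1) | c x y z. True}
   \<union> {Poly_Mapping.single (x, y, sZ c z) 1 - fscale c (Poly_Mapping.single (x, y, z) 1) | c x y z. True}"

definition teq3 :: "('k::field \<Rightarrow> 'x::ab_group_add \<Rightarrow> 'x) \<Rightarrow> ('k \<Rightarrow> 'y::ab_group_add \<Rightarrow> 'y)
    \<Rightarrow> ('k \<Rightarrow> 'z::ab_group_add \<Rightarrow> 'z)
    \<Rightarrow> ('x \<times> 'y \<times> 'z) list \<Rightarrow> ('x \<times> 'y \<times> 'z) list \<Rightarrow> bool" where
  "teq3 sX sY sZ xs ys \<longleftrightarrow>
     (tfree xs - tfree ys :: ('x \<times> 'y \<times> 'z) \<Rightarrow>\<^sub>0 'k) \<in> module.span fscale (trel3 sX sY sZ)"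

text \<open>The coproduct \<open>\<Delta> : H \<rightarrow> H \<otimes> H\<close> is given by a representative
  \<open>sw h = [(h_1,h_2), ...]\<close> (Sweedler notation \<open>\<Delta>(h) = h_1 \<otimes> h_2\<close>);
  \<open>eps\<close> is the counit and \<open>S\<close> the antipode.\<close>

definition hopf_algebra :: "('k::field \<Rightarrow> 'h::ring_1 \<Rightarrow> 'h) \<Rightarrow> ('h \<Rightarrow> ('h \<times> 'h) list)
    \<Rightarrow> ('h \<Rightarrow> 'k) \<Rightarrow> ('h \<Rightarrow> 'h) \<Rightarrow> bool" where
  "hopf_algebra sc sw eps S \<longleftrightarrow>
     k_algebra sc \<and>
     \<comment> \<open>\<Delta> is k-linear\<close>
     (\<forall>x y. teq2 sc sc (sw (x + y)) (sw x @ sw y)) \<and>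
     (\<forall>c x. teq2 sc sc (sw (sc c x)) (map (\<lambda>(a, b). (sc c a, b)) (sw x))) \<and>
     \<comment> \<open>coassociativity\<close>
     (\<forall>h. teq3 sc sc sc
            (concat (map (\<lambda>(a, b). map (\<lambda>(a1, a2). (a1, a2, b)) (sw a)) (sw h)))
            (concat (map (\<lambda>(a, b). map (\<lambda>(b1, b2). (a, b1, b2)) (sw b)) (sw h)))) \<and>
     \<comment> \<open>counit\<close>
     Vector_Spaces.linear sc (*) eps \<and>
     (\<forall>h. sum_list (map (\<lambda>(a, b). sc (eps a) b) (sw h)) = h) \<and>
     (\<forall>h. sum_list (map (\<lambda>(a, b). sc (eps b) a) (sw h)) = h) \<and>
     \<comment> \<open>\<Delta> and \<open>eps\<close> are algebra maps\<close>
     (\<forall>x y. teq2 sc sc (sw (x * y))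
              (concat (map (\<lambda>(a, b). map (\<lambda>(c, d). (a * c, b * d)) (sw y)) (sw x)))) \<and>
     teq2 sc sc (sw 1) [(1, 1)] \<and>
     (\<forall>x y. eps (x * y) = eps x * eps y) \<and> eps 1 = 1 \<and>
     \<comment> \<open>antipode\<close>
     Vector_Spaces.linear sc sc S \<and>
     (\<forall>h. sum_list (map (\<lambda>(a, b). S a * b) (sw h)) = sc (eps h) 1) \<and>
     (\<forall>h. sum_list (map (\<lambda>(a, b). a * S b) (sw h)) = sc (eps h) 1)"

definition cocommutative :: "('k::field \<Rightarrow> 'h::ring_1 \<Rightarrow> 'h) \<Rightarrow> ('h \<Rightarrow> ('h \<times> 'h) list) \<Rightarrow> bool" where
  "cocommutative sc sw \<longleftrightarrow> (\<forall>h. teq2 sc sc (sw h) (map prod.swap (sw h)))"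

definition bimodule_algebra :: "('k::field \<Rightarrow> 'h::ring_1 \<Rightarrow> 'h) \<Rightarrow> ('h \<Rightarrow> ('h \<times> 'h) list)
    \<Rightarrow> ('h \<Rightarrow> 'k) \<Rightarrow> ('k \<Rightarrow> 'a::ring_1 \<Rightarrow> 'a)
    \<Rightarrow> ('h \<Rightarrow> 'a \<Rightarrow> 'a) \<Rightarrow> ('a \<Rightarrow> 'h \<Rightarrow> 'a) \<Rightarrow> bool" where
  "bimodule_algebra scH sw eps scA lact ract \<longleftrightarrow>
     k_algebra scA \<and>
     \<comment> \<open>bilinearity of the actions\<close>
     (\<forall>h. Vector_Spaces.linear scA scA (lact h)) \<and>
     (\<forall>a. Vector_Spaces.linear scH scA (\<lambda>h. lact h a)) \<and>
     (\<forall>h. Vector_Spaces.linear scA scA (\<lambda>a. ract a h)) \<and>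
     (\<forall>a. Vector_Spaces.linear scH scA (ract a)) \<and>
     \<comment> \<open>H-bimodule\<close>
     (\<forall>x y a. lact (x * y) a = lact x (lact y a)) \<and> (\<forall>a. lact 1 a = a) \<and>
     (\<forall>x y a. ract a (x * y) = ract (ract a x) y) \<and> (\<forall>a. ract a 1 = a) \<and>
     (\<forall>x y a. ract (lact x a) y = lact x (ract a y)) \<and>
     \<comment> \<open>compatibility with the algebra structure\<close>
     (\<forall>h a b. lact h (a * b) = sum_list (map (\<lambda>(h1, h2). lact h1 a * lact h2 b) (sw h))) \<and>
     (\<forall>h a b. ract (a * b) h = sum_list (map (\<lambda>(h1, h2). ract a h1 * ract b h2) (sw h))) \<and>
     (\<forall>h. lact h 1 = scA (eps h) 1) \<and>
     (\<forall>h. ract 1 h = scA (eps h) 1)"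

definition left_module_algebra :: "('k::field \<Rightarrow> 'h::ring_1 \<Rightarrow> 'h) \<Rightarrow> ('h \<Rightarrow> ('h \<times> 'h) list)
    \<Rightarrow> ('h \<Rightarrow> 'k) \<Rightarrow> ('k \<Rightarrow> 'a::ring_1 \<Rightarrow> 'a) \<Rightarrow> ('h \<Rightarrow> 'a \<Rightarrow> 'a) \<Rightarrow> bool" where
  "left_module_algebra scH sw eps scA act \<longleftrightarrow>
     k_algebra scA \<and>
     (\<forall>h. Vector_Spaces.linear scA scA (act h)) \<and>
     (\<forall>a. Vector_Spaces.linear scH scA (\<lambda>h. act h a)) \<and>
     (\<forall>x y a. act (x * y) a = act x (act y a)) \<and> (\<forall>a. act 1 a = a) \<and>
     (\<forall>h a b. act h (a * b) = sum_list (map (\<lambda>(h1, h2). act h1 a * act h2 b) (sw h))) \<and>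
     (\<forall>h. act h 1 = scA (eps h) 1)"

definition conj_action :: "('h \<Rightarrow> ('h \<times> 'h) list) \<Rightarrow> ('h \<Rightarrow> 'h)
    \<Rightarrow> ('h \<Rightarrow> 'a \<Rightarrow> 'a) \<Rightarrow> ('a \<Rightarrow> 'h \<Rightarrow> 'a) \<Rightarrow> 'h \<Rightarrow> 'a::ab_group_add \<Rightarrow> 'a" where
  "conj_action sw S lact ract h a = sum_list (map (\<lambda>(h1, h2). ract (lact h1 a) (S h2)) (sw h))"

text \<open>L-R-smash product:
  \<open>(\<phi> \<natural> h)(\<psi> \<natural> h') = (\<phi> \<cdot> h'_2)(h_1 \<cdot> \<psi>) \<natural> h_2 h'_1\<close>, extended bilinearly.\<close>
definition lr_smash_mult :: "('h \<Rightarrow> ('h \<times> 'h) list) \<Rightarrow> ('h \<Rightarrow> 'a \<Rightarrow> 'a) \<Rightarrow> ('a \<Rightarrow> 'h \<Rightarrow> 'a)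
    \<Rightarrow> ('a::times \<times> 'h::times) list \<Rightarrow> ('a \<times> 'h) list \<Rightarrow> ('a \<times> 'h) list" where
  "lr_smash_mult sw lact ract xs ys =
     concat (map (\<lambda>(\<phi>, h). concat (map (\<lambda>(\<psi>, h'). concat (map (\<lambda>(h1, h2).
        map (\<lambda>(h'1, h'2). (ract \<phi> h'2 * lact h1 \<psi>, h2 * h'1)) (sw h')) (sw h))) ys)) xs)"

text \<open>Smash product: \<open>(\<phi> # h)(\<phi>' # h') = \<phi> (h_1 \<rightarrow> \<phi>') # h_2 h'\<close>, extended bilinearly.\<close>
definition smash_mult :: "('h \<Rightarrow> ('h \<times> 'h) list) \<Rightarrow> ('h \<Rightarrow> 'a \<Rightarrow> 'a)
    \<Rightarrow> ('a::times \<times> 'h::times) list \<Rightarrow> ('a \<times> 'h) list \<Rightarrow> ('a \<times> 'h) list" where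
  "smash_mult sw act xs ys =
     concat (map (\<lambda>(\<phi>, h). concat (map (\<lambda>(\<phi>', h').
        map (\<lambda>(h1, h2). (\<phi> * act h1 \<phi>', h2 * h')) (sw h)) ys)) xs)"

definition tensor_alg_iso :: "('k::field \<Rightarrow> 'a::ring_1 \<Rightarrow> 'a) \<Rightarrow> ('k \<Rightarrow> 'h::ring_1 \<Rightarrow> 'h)
    \<Rightarrow> (('a \<times> 'h) list \<Rightarrow> ('a \<times> 'h) list \<Rightarrow> ('a \<times> 'h) list)
    \<Rightarrow> (('a \<times> 'h) list \<Rightarrow> ('a \<times> 'h) list \<Rightarrow> ('a \<times> 'h) list)
    \<Rightarrow> (('a \<times> 'h) list \<Rightarrow> ('a \<times> 'h) list) \<Rightarrow> bool" where
  "tensor_alg_iso scA scH m1 m2 \<Phi> \<longleftrightarrow>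
     (\<forall>xs ys. teq2 scA scH xs ys \<longrightarrow> teq2 scA scH (\<Phi> xs) (\<Phi> ys)) \<and>
     (\<forall>xs ys. teq2 scA scH (\<Phi> (xs @ ys)) (\<Phi> xs @ \<Phi> ys)) \<and>
     (\<forall>c xs. teq2 scA scH (\<Phi> (map (\<lambda>(a, h). (scA c a, h)) xs))
                           (map (\<lambda>(a, h). (scA c a, h)) (\<Phi> xs))) \<and>
     (\<forall>xs ys. teq2 scA scH (\<Phi> xs) (\<Phi> ys) \<longrightarrow> teq2 scA scH xs ys) \<and>
     (\<forall>ys. \<exists>xs. teq2 scA scH (\<Phi> xs) ys) \<and>
     (\<forall>xs ys. teq2 scA scH (\<Phi> (m1 xs ys)) (m2 (\<Phi> xs) (\<Phi> ys))) \<and>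
     teq2 scA scH (\<Phi> [(1, 1)]) [(1, 1)]"

end

(*
  The isomorphism is \<Phi>(\<phi> \<natural> h) = \<phi> \<cdot> S(h\<^sub>2) # h\<^sub>1, with inverse \<phi> # h \<mapsto> \<phi> \<cdot> h\<^sub>2 \<natural> h\<^sub>1.

  Elements of A \<otimes> H are lists of pure tensors, and two lists are equal in A \<otimes> H exactly when
  every bilinear form \<beta> : A \<times> H \<rightarrow> k takes the same value on them (a functional on the free
  vector space that vanishes on the bilinearity relations but not on their difference exists by
  basis extension). So every identity is checked after applying such a \<beta>, where Sweedler
  notation is an honest finite sum that is multilinear in the Sweedler factors. Indexing iterated
  coproducts by lists, generalised coassociativity, the counit and antipode contractions and, by
  cocommutativity, the exchange of two adjacent factors turn both \<Phi>((\<phi> \<natural> h)(\<psi> \<natural> h')) and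
  \<Phi>(\<phi> \<natural> h) \<Phi>(\<psi> \<natural> h') into \<phi> \<cdot> S(h\<^sub>4) (h\<^sub>1 \<cdot> \<psi> \<cdot> S(h'\<^sub>2) S(h\<^sub>i)) # h\<^sub>j h'\<^sub>1 with {i, j} = {2, 3}.
  Cocommutativity also gives \<Delta>(S h) = S h\<^sub>1 \<otimes> S h\<^sub>2, which makes h \<rightarrow> \<phi> = h\<^sub>1 \<cdot> \<phi> \<cdot> S(h\<^sub>2)
  a module algebra action.
*)

theory Submission
  imports Defs
begin

text \<open>Unlike \<^const>\<open>Vector_Spaces.linear\<close>, this does not ask the two scalar multiplications to
  satisfy the vector space axioms, which keeps the many linearity side conditions below free of them.\<close>
definition k_linear :: "('k::field \<Rightarrow> 'x::ab_group_add \<Rightarrow> 'x) \<Rightarrow> ('k \<Rightarrow> 'v::ab_group_add \<Rightarrow> 'v)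
    \<Rightarrow> ('x \<Rightarrow> 'v) \<Rightarrow> bool" where
  "k_linear s1 s2 f \<longleftrightarrow> (\<forall>x y. f (x + y) = f x + f y) \<and> (\<forall>c x. f (s1 c x) = s2 c (f x))"

lemma vector_space_field: "vector_space ((*) :: 'k::field \<Rightarrow> 'k \<Rightarrow> 'k)"
  by unfold_locales (auto simp: algebra_simps)

lemma k_linear_add: "k_linear s1 s2 f \<Longrightarrow> f (x + y) = f x + f y"
  by (simp add: k_linear_def)

lemma k_linear_scale: "k_linear s1 s2 f \<Longrightarrow> f (s1 c x) = s2 c (f x)"
  by (simp add: k_linear_def)

lemma k_linear_zero: "k_linear s1 s2 f \<Longrightarrow> f 0 = 0"
  using k_linear_add[of s1 s2 f 0 0] by simp

lemma k_linear_diff: "k_linear s1 s2 f \<Longrightarrow> f (x - y) = f x - f y"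
  using k_linear_add[of s1 s2 f "x - y" y] by (simp add: algebra_simps)

lemma k_linear_sum_list:
  "k_linear s1 s2 f \<Longrightarrow> f (sum_list (map g xs)) = sum_list (map (\<lambda>x. f (g x)) xs)"
  by (induction xs) (auto simp: k_linear_zero k_linear_add)

lemma k_linear_iff_linear:
  "vector_space s1 \<Longrightarrow> vector_space s2 \<Longrightarrow> Vector_Spaces.linear s1 s2 f \<longleftrightarrow> k_linear s1 s2 f"
  by (simp add: Vector_Spaces.linear_iff k_linear_def)

lemma k_linear_if_linear: "Vector_Spaces.linear s1 s2 f \<Longrightarrow> k_linear s1 s2 f"
  by (simp add: Vector_Spaces.linear_iff k_linear_def)

lemma k_linear_id: "k_linear s s (\<lambda>x. x)"
  by (simp add: k_linear_def)

lemma k_linear_comp: "k_linear s2 s3 g \<Longrightarrow> k_linear s1 s2 f \<Longrightarrow> k_linear s1 s3 (\<lambda>x. g (f x))"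
  by (simp add: k_linear_def)

lemma k_linear_add_fun:
  "vector_space s2 \<Longrightarrow> k_linear s1 s2 f \<Longrightarrow> k_linear s1 s2 g \<Longrightarrow> k_linear s1 s2 (\<lambda>x. f x + g x)"
  by (simp add: k_linear_def vector_space.vector_space_assms(1) algebra_simps)

lemma k_linear_sum_list_fun:
  assumes "vector_space s2" "\<And>z. z \<in> set zs \<Longrightarrow> k_linear s1 s2 (\<lambda>x. F x z)"
  shows "k_linear s1 s2 (\<lambda>x. sum_list (map (F x) zs))"
  using assms(2)
proof (induction zs)
  case Nil
  then show ?case
    using assms(1) by (simp add: k_linear_def module.scale_zero_right module_iff_vector_space)
next
  case (Cons z zs)
  then show ?case using k_linear_add_fun[OF assms(1) Cons.prems[of z] Cons.IH] by simp
qed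

lemma k_linear_scale_right:
  "vector_space s2 \<Longrightarrow> k_linear s1 s2 f \<Longrightarrow> k_linear s1 s2 (\<lambda>x. s2 c (f x))"
  by (simp add: k_linear_def vector_space.vector_space_assms(1,3) mult.commute)

lemma k_linear_scale_left:
  "vector_space s2 \<Longrightarrow> k_linear s1 (*) f \<Longrightarrow> k_linear s1 s2 (\<lambda>x. s2 (f x) v)"
  by (simp add: k_linear_def vector_space.vector_space_assms(2,3))

lemma k_algebra_field: "k_algebra ((*) :: 'k::field \<Rightarrow> 'k \<Rightarrow> 'k)"
  by (simp add: k_algebra_def vector_space_field algebra_simps)

lemma k_linear_mult_right: "k_algebra s2 \<Longrightarrow> k_linear s1 s2 f \<Longrightarrow> k_linear s1 s2 (\<lambda>x. f x * c)"
  by (simp add: k_linear_def k_algebra_def distrib_right)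

lemma k_linear_mult_left: "k_algebra s2 \<Longrightarrow> k_linear s1 s2 f \<Longrightarrow> k_linear s1 s2 (\<lambda>x. c * f x)"
  unfolding k_linear_def k_algebra_def by (metis distrib_left)

lemma k_algebra_scale_mult_left: "k_algebra s \<Longrightarrow> s c (x * y) = s c x * y"
  unfolding k_algebra_def by blast

lemma k_algebra_scale_mult_right: "k_algebra s \<Longrightarrow> s c (x * y) = x * s c y"
  unfolding k_algebra_def by blast

lemma k_algebra_scale_one_mult: "k_algebra s \<Longrightarrow> s c 1 * x = s c x"
  by (simp add: k_algebra_scale_mult_left[symmetric])

lemma k_algebra_mult_scale_one: "k_algebra s \<Longrightarrow> x * s c 1 = s c x"
  by (simp add: k_algebra_scale_mult_right[symmetric])

subsection \<open>Tensor equality via bilinear forms\<close>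

definition k_bilinear :: "('k::field \<Rightarrow> 'x::ab_group_add \<Rightarrow> 'x) \<Rightarrow> ('k \<Rightarrow> 'y::ab_group_add \<Rightarrow> 'y)
    \<Rightarrow> ('k \<Rightarrow> 'v::ab_group_add \<Rightarrow> 'v) \<Rightarrow> ('x \<Rightarrow> 'y \<Rightarrow> 'v) \<Rightarrow> bool" where
  "k_bilinear sX sY sV G \<longleftrightarrow> (\<forall>y. k_linear sX sV (\<lambda>x. G x y)) \<and> (\<forall>x. k_linear sY sV (G x))"

definition k_trilinear :: "('k::field \<Rightarrow> 'x::ab_group_add \<Rightarrow> 'x) \<Rightarrow> ('k \<Rightarrow> 'y::ab_group_add \<Rightarrow> 'y)
    \<Rightarrow> ('k \<Rightarrow> 'z::ab_group_add \<Rightarrow> 'z) \<Rightarrow> ('k \<Rightarrow> 'v::ab_group_add \<Rightarrow> 'v) \<Rightarrow> ('x \<Rightarrow> 'y \<Rightarrow> 'z \<Rightarrow> 'v) \<Rightarrow> bool" where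
  "k_trilinear sX sY sZ sV G \<longleftrightarrow> (\<forall>y z. k_linear sX sV (\<lambda>x. G x y z)) \<and>
     (\<forall>x z. k_linear sY sV (\<lambda>y. G x y z)) \<and> (\<forall>x y. k_linear sZ sV (G x y))"

definition tensor_apply :: "('x \<Rightarrow> 'y \<Rightarrow> 'v::comm_monoid_add) \<Rightarrow> ('x \<times> 'y) list \<Rightarrow> 'v" where
  "tensor_apply G xs = sum_list (map (\<lambda>(x, y). G x y) xs)"

lemma lookup_fscale: "Poly_Mapping.lookup (fscale c p) z = c * Poly_Mapping.lookup p z"
  unfolding fscale_def by transfer (auto simp: when_def)

lemma vector_space_fscale: "vector_space (fscale :: 'k::field \<Rightarrow> ('i \<Rightarrow>\<^sub>0 'k) \<Rightarrow> _)"
  by unfold_locales (auto intro!: poly_mapping_eqI simp: lookup_fscale lookup_add algebra_simps)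

lemma module_fscale: "module (fscale :: 'k::field \<Rightarrow> ('i \<Rightarrow>\<^sub>0 'k) \<Rightarrow> _)"
  using vector_space_fscale by (simp add: module_iff_vector_space)

lemma keys_fscale: "Poly_Mapping.keys (fscale c p) \<subseteq> Poly_Mapping.keys p"
  by (auto simp: in_keys_iff lookup_fscale)

lemma teq2_refl: "teq2 sX sY xs xs"
  unfolding teq2_def using module.span_zero[OF module_fscale] by simp

definition free_lift :: "('k::field \<Rightarrow> 'v::ab_group_add \<Rightarrow> 'v) \<Rightarrow> ('i \<Rightarrow> 'v) \<Rightarrow> ('i \<Rightarrow>\<^sub>0 'k) \<Rightarrow> 'v" where
  "free_lift sV G p = (\<Sum>z\<in>Poly_Mapping.keys p. sV (Poly_Mapping.lookup p z) (G z))"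

context
  fixes sV :: "'k::field \<Rightarrow> 'v::ab_group_add \<Rightarrow> 'v" and G :: "'i \<Rightarrow> 'v"
  assumes vs: "vector_space sV"
begin

interpretation V: vector_space sV by (rule vs)

lemma free_lift_superset:
  assumes "finite K" "Poly_Mapping.keys p \<subseteq> K"
  shows "free_lift sV G p = (\<Sum>z\<in>K. sV (Poly_Mapping.lookup p z) (G z))"
  unfolding free_lift_def by (rule sum.mono_neutral_left[OF assms]) (auto simp: in_keys_iff)

lemma k_linear_free_lift: "k_linear fscale sV (free_lift sV G)"
proof -
  have "free_lift sV G (p + q) = free_lift sV G p + free_lift sV G q" for p q
  proof -
    let ?K = "Poly_Mapping.keys p \<union> Poly_Mapping.keys q"
    have "free_lift sV G (p + q) = (\<Sum>z\<in>?K. sV (Poly_Mapping.lookup (p + q) z) (G z))"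
      by (rule free_lift_superset) (simp_all add: keys_add)
    also have "\<dots> = free_lift sV G p + free_lift sV G q"
      by (simp add: free_lift_superset[of ?K] lookup_add V.scale_left_distrib sum.distrib)
    finally show ?thesis .
  qed
  moreover have "free_lift sV G (fscale c p) = sV c (free_lift sV G p)" for c p
  proof -
    have "free_lift sV G (fscale c p) = (\<Sum>z\<in>Poly_Mapping.keys p. sV (Poly_Mapping.lookup (fscale c p) z) (G z))"
      by (rule free_lift_superset) (simp_all add: keys_fscale)
    then show ?thesis by (simp add: free_lift_def lookup_fscale V.scale_sum_right)
  qed
  ultimately show ?thesis by (simp add: k_linear_def)
qed

lemma free_lift_single: "free_lift sV G (Poly_Mapping.single z 1) = G z"
  by (simp add: free_lift_def)

lemma free_lift_tfree: "free_lift sV G (tfree xs) = sum_list (map G xs)"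
  unfolding tfree_def
  by (induction xs)
    (auto simp: k_linear_add[OF k_linear_free_lift] k_linear_zero[OF k_linear_free_lift] free_lift_single)

lemma sum_list_eq_if_tfree_diff_in_span:
  assumes "\<And>r. r \<in> R \<Longrightarrow> free_lift sV G r = 0" "tfree xs - tfree ys \<in> module.span fscale R"
  shows "sum_list (map G xs) = sum_list (map G ys)"
proof -
  note L = k_linear_free_lift
  have "free_lift sV G (tfree xs - tfree ys) = 0"
    using assms(2)
    by (rule module.span_induct_alt[OF module_fscale])
      (auto simp: assms(1) k_linear_zero[OF L] k_linear_add[OF L] k_linear_scale[OF L])
  then show ?thesis by (simp add: k_linear_diff[OF L] free_lift_tfree)
qed

end

lemma teq2_imp_tensor_apply_eq:
  assumes "vector_space sV" "k_bilinear sX sY sV G" "teq2 sX sY xs ys"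
  shows "tensor_apply G xs = tensor_apply G ys"
  unfolding tensor_apply_def
proof (rule sum_list_eq_if_tfree_diff_in_span[OF assms(1), where R = "trel2 sX sY"])
  show "tfree xs - tfree ys \<in> module.span fscale (trel2 sX sY)"
    using assms(3) by (simp add: teq2_def)
next
  fix r assume "r \<in> trel2 sX sY"
  note L = k_linear_free_lift[OF assms(1), of "\<lambda>(x, y). G x y"]
  show "free_lift sV (\<lambda>(x, y). G x y) r = 0"
    using \<open>r \<in> trel2 sX sY\<close> assms(2)
    by (auto simp: trel2_def k_bilinear_def k_linear_def k_linear_diff[OF L] k_linear_scale[OF L]
        free_lift_single[OF assms(1)])
qed

lemma teq3_imp_sum_eq:
  assumes "vector_space sV" "k_trilinear sX sY sZ sV G" "teq3 sX sY sZ xs ys"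
  shows "sum_list (map (\<lambda>(x, y, z). G x y z) xs) = sum_list (map (\<lambda>(x, y, z). G x y z) ys)"
proof (rule sum_list_eq_if_tfree_diff_in_span[OF assms(1), where R = "trel3 sX sY sZ"])
  show "tfree xs - tfree ys \<in> module.span fscale (trel3 sX sY sZ)"
    using assms(3) by (simp add: teq3_def)
next
  fix r assume "r \<in> trel3 sX sY sZ"
  note L = k_linear_free_lift[OF assms(1), of "\<lambda>(x, y, z). G x y z"]
  show "free_lift sV (\<lambda>(x, y, z). G x y z) r = 0"
    using \<open>r \<in> trel3 sX sY sZ\<close> assms(2)
    by (auto simp: trel3_def k_trilinear_def k_linear_def k_linear_diff[OF L] k_linear_scale[OF L]
        free_lift_single[OF assms(1)])
qed

lemma separating_functional:
  fixes s :: "'k::field \<Rightarrow> 'v::ab_group_add \<Rightarrow> 'v"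
  assumes vs: "vector_space s" and v: "v \<notin> module.span s R"
  obtains g where "Vector_Spaces.linear s (*) g" "\<And>r. r \<in> R \<Longrightarrow> g r = 0" "g v = 1"
proof -
  interpret V: vector_space s by (rule vs)
  interpret P: vector_space_pair s "(*) :: 'k \<Rightarrow> 'k \<Rightarrow> 'k"
    using vs vector_space_field by (simp add: vector_space_pair_def)
  obtain B where B: "B \<subseteq> R" "V.independent B" "R \<subseteq> V.span B"
    by (rule V.maximal_independent_subset)
  have vB: "v \<notin> V.span B" using v B(1) V.span_mono by blast
  obtain g where g: "Vector_Spaces.linear s (*) g" "\<forall>x\<in>insert v B. g x = (if x = v then 1 else 0)"
    using P.linear_independent_extend[OF V.independent_insertI[OF vB B(2)], of "\<lambda>x. if x = v then 1 else 0"] by blast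
  have "g r = 0" if "r \<in> R" for r
    using P.linear_eq_0_on_span[OF g(1) _ subsetD[OF B(3) that]] g(2) vB V.span_base by fastforce
  with g that show ?thesis by simp
qed

lemma teq2_if_bilinear_forms_agree:
  fixes sX :: "'k::field \<Rightarrow> 'x::ab_group_add \<Rightarrow> 'x" and sY :: "'k \<Rightarrow> 'y::ab_group_add \<Rightarrow> 'y"
  assumes agree: "\<And>\<beta>. k_bilinear sX sY ((*) :: 'k \<Rightarrow> 'k \<Rightarrow> 'k) \<beta> \<Longrightarrow> tensor_apply \<beta> xs = tensor_apply \<beta> ys"
  shows "teq2 sX sY xs ys"
proof (rule ccontr)
  assume "\<not> teq2 sX sY xs ys"
  then obtain g :: "('x \<times> 'y \<Rightarrow>\<^sub>0 'k) \<Rightarrow> 'k" where g: "Vector_Spaces.linear fscale (*) g"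
      "\<And>r. r \<in> trel2 sX sY \<Longrightarrow> g r = 0" "g (tfree xs - tfree ys) = 1"
    unfolding teq2_def using separating_functional[OF vector_space_fscale] by metis
  note gl = k_linear_if_linear[OF g(1)]
  define \<beta> where "\<beta> x y = g (Poly_Mapping.single (x, y) 1)" for x y
  have "g (Poly_Mapping.single (x + x', y) 1 - Poly_Mapping.single (x, y) 1 - Poly_Mapping.single (x', y) 1) = 0"
    "g (Poly_Mapping.single (x, y + y') 1 - Poly_Mapping.single (x, y) 1 - Poly_Mapping.single (x, y') 1) = 0"
    "g (Poly_Mapping.single (sX c x, y) 1 - fscale c (Poly_Mapping.single (x, y) 1)) = 0"
    "g (Poly_Mapping.single (x, sY c y) 1 - fscale c (Poly_Mapping.single (x, y) 1)) = 0"
    for x x' y y' c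
    by (rule g(2), unfold trel2_def, blast)+
  then have "k_bilinear sX sY (*) \<beta>"
    by (simp add: k_bilinear_def k_linear_def \<beta>_def k_linear_diff[OF gl] k_linear_scale[OF gl] diff_eq_eq)
  have "g (tfree zs) = tensor_apply \<beta> zs" for zs
    unfolding tfree_def tensor_apply_def \<beta>_def by (simp add: k_linear_sum_list[OF gl] split_def)
  then have "g (tfree xs - tfree ys) = 0"
    using agree[OF \<open>k_bilinear sX sY (*) \<beta>\<close>] by (simp add: k_linear_diff[OF gl])
  with g(3) show False by simp
qed

lemma teq2_iff_bilinear_forms:
  "teq2 sX sY xs ys \<longleftrightarrow>
     (\<forall>\<beta>. k_bilinear sX sY ((*) :: 'k::field \<Rightarrow> 'k \<Rightarrow> 'k) \<beta> \<longrightarrow> tensor_apply \<beta> xs = tensor_apply \<beta> ys)"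
  using teq2_if_bilinear_forms_agree teq2_imp_tensor_apply_eq[OF vector_space_field] by blast

subsection \<open>Sweedler sums\<close>

definition sweedler_sum :: "('h \<Rightarrow> ('h \<times> 'h) list) \<Rightarrow> 'h \<Rightarrow> ('h \<Rightarrow> 'h \<Rightarrow> 'v::comm_monoid_add) \<Rightarrow> 'v" where
  "sweedler_sum sw h F = tensor_apply F (sw h)"

text \<open>The terms \<open>h\<^sub>1 \<otimes> \<dots> \<otimes> h\<^sub>n\<^sub>+\<^sub>1\<close> of the iterated coproduct, each a list of length \<open>n + 1\<close>.\<close>
fun iter_coproduct :: "('h \<Rightarrow> ('h \<times> 'h) list) \<Rightarrow> nat \<Rightarrow> 'h \<Rightarrow> 'h list list" where
  "iter_coproduct sw 0 h = [[h]]"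
| "iter_coproduct sw (Suc n) h = concat (map (\<lambda>(a, b). map ((#) a) (iter_coproduct sw n b)) (sw h))"

definition iter_sweedler_sum :: "('h \<Rightarrow> ('h \<times> 'h) list) \<Rightarrow> nat \<Rightarrow> 'h \<Rightarrow> ('h list \<Rightarrow> 'v::comm_monoid_add) \<Rightarrow> 'v" where
  "iter_sweedler_sum sw n h G = sum_list (map G (iter_coproduct sw n h))"

lemma sum_list_concat_map:
  "sum_list (map f (concat (map g xs))) = sum_list (map (\<lambda>x. sum_list (map f (g x))) xs)"
  by (induction xs) auto

lemma sum_list_map_commute:
  "(sum_list (map (\<lambda>x. sum_list (map (f x) ys)) xs) :: 'v::comm_monoid_add)
   = sum_list (map (\<lambda>y. sum_list (map (\<lambda>x. f x y) xs)) ys)"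
  by (induction xs) (simp_all add: sum_list_addf)

lemma iter_sweedler_sum_0: "iter_sweedler_sum sw 0 h G = G [h]"
  by (simp add: iter_sweedler_sum_def)

lemma iter_sweedler_sum_Suc:
  "iter_sweedler_sum sw (Suc n) h G = sweedler_sum sw h (\<lambda>a b. iter_sweedler_sum sw n b (\<lambda>t. G (a # t)))"
  by (simp add: iter_sweedler_sum_def sweedler_sum_def tensor_apply_def sum_list_concat_map split_def o_def)

lemma iter_sweedler_sum_1: "iter_sweedler_sum sw (Suc 0) h G = sweedler_sum sw h (\<lambda>a b. G [a, b])"
  by (simp add: iter_sweedler_sum_Suc iter_sweedler_sum_0)

lemma length_iter_coproduct: "t \<in> set (iter_coproduct sw n h) \<Longrightarrow> length t = Suc n"
  by (induction n arbitrary: h t) auto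

lemma iter_sweedler_sum_cong:
  "(\<And>t. length t = Suc n \<Longrightarrow> F t = G t) \<Longrightarrow> iter_sweedler_sum sw n h F = iter_sweedler_sum sw n h G"
  unfolding iter_sweedler_sum_def
  by (rule arg_cong[where f = sum_list], rule map_cong) (auto dest: length_iter_coproduct)

lemma sweedler_sum_commute:
  "sweedler_sum sw h (\<lambda>a b. sweedler_sum sw g (F a b)) = sweedler_sum sw g (\<lambda>c d. sweedler_sum sw h (\<lambda>a b. F a b c d))"
  unfolding sweedler_sum_def tensor_apply_def
  using sum_list_map_commute[of "\<lambda>x y. F (fst x) (snd x) (fst y) (snd y)"] by (simp add: split_def)

lemma iter_sweedler_sum_sweedler_sum_commute:
  "iter_sweedler_sum sw n h (\<lambda>t. sweedler_sum sw g (F t)) = sweedler_sum sw g (\<lambda>c d. iter_sweedler_sum sw n h (\<lambda>t. F t c d))"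
  unfolding sweedler_sum_def tensor_apply_def iter_sweedler_sum_def
  using sum_list_map_commute[of "\<lambda>x y. F x (fst y) (snd y)"] by (simp add: split_def)

lemma sweedler_sum_linear: "k_linear s1 s2 f \<Longrightarrow> f (sweedler_sum sw h F) = sweedler_sum sw h (\<lambda>a b. f (F a b))"
  unfolding sweedler_sum_def tensor_apply_def by (simp add: k_linear_sum_list split_def)

lemma k_linear_sweedler_sum_fun:
  "vector_space s2 \<Longrightarrow> (\<And>a b. k_linear s1 s2 (\<lambda>x. F x a b)) \<Longrightarrow> k_linear s1 s2 (\<lambda>x. sweedler_sum sw h (F x))"
  unfolding sweedler_sum_def tensor_apply_def by (rule k_linear_sum_list_fun) (auto simp: split_def)

lemma k_linear_iter_sweedler_sum_fun:
  "vector_space s2 \<Longrightarrow> (\<And>t. length t = Suc n \<Longrightarrow> k_linear s1 s2 (\<lambda>x. G x t))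
   \<Longrightarrow> k_linear s1 s2 (\<lambda>x. iter_sweedler_sum sw n h (G x))"
  unfolding iter_sweedler_sum_def by (rule k_linear_sum_list_fun) (auto dest: length_iter_coproduct)

definition k_multilinear :: "('k::field \<Rightarrow> 'h::ab_group_add \<Rightarrow> 'h) \<Rightarrow> ('k \<Rightarrow> 'v::ab_group_add \<Rightarrow> 'v) \<Rightarrow> nat
    \<Rightarrow> ('h list \<Rightarrow> 'v) \<Rightarrow> bool" where
  "k_multilinear sH sV n G \<longleftrightarrow>
     (\<forall>t i. length t = Suc n \<longrightarrow> i \<le> n \<longrightarrow> k_linear sH sV (\<lambda>x. G (t[i := x])))"

lemma k_multilinearD:
  "k_multilinear sH sV n G \<Longrightarrow> length t = Suc n \<Longrightarrow> i \<le> n \<Longrightarrow> k_linear sH sV (\<lambda>x. G (t[i := x]))"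
  by (simp add: k_multilinear_def)

lemma k_multilinear_at:
  assumes "k_multilinear sH sV n G" "length t = Suc n" "i \<le> n" "\<And>x. F x = G (t[i := x])"
  shows "k_linear sH sV F"
proof -
  have "F = (\<lambda>x. G (t[i := x]))" using assms(4) by auto
  then show ?thesis using k_multilinearD[OF assms(1-3)] by simp
qed

lemma k_multilinear_Cons:
  fixes G :: "'h::ab_group_add list \<Rightarrow> 'v::ab_group_add"
  shows "k_multilinear sH sV (Suc n) G \<Longrightarrow> k_multilinear sH sV n (\<lambda>t. G (a # t))"
  unfolding k_multilinear_def
proof (intro allI impI)
  fix t :: "'h list" and i
  assume "\<forall>t i. length t = Suc (Suc n) \<longrightarrow> i \<le> Suc n \<longrightarrow> k_linear sH sV (\<lambda>x. G (t[i := x]))"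
    "length t = Suc n" "i \<le> n"
  then have "k_linear sH sV (\<lambda>x. G ((a # t)[Suc i := x]))" by (metis Suc_le_mono length_Cons)
  then show "k_linear sH sV (\<lambda>x. G (a # t[i := x]))" by simp
qed

lemma k_multilinear_head:
  "k_multilinear sH sV (Suc n) G \<Longrightarrow> length t = Suc n \<Longrightarrow> k_linear sH sV (\<lambda>x. G (x # t))"
  using k_multilinearD[of sH sV "Suc n" G "a # t" 0 for a] by simp

lemma k_multilinear_len2I:
  "(\<And>b. k_linear sH sV (\<lambda>x. G [x, b])) \<Longrightarrow> (\<And>a. k_linear sH sV (\<lambda>x. G [a, x]))
   \<Longrightarrow> k_multilinear sH sV (Suc 0) G"
  unfolding k_multilinear_def by (auto simp: length_Suc_conv le_Suc_eq)

lemma k_multilinear_len3I: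
  "(\<And>b c. k_linear sH sV (\<lambda>x. G [x, b, c])) \<Longrightarrow> (\<And>a c. k_linear sH sV (\<lambda>x. G [a, x, c]))
   \<Longrightarrow> (\<And>a b. k_linear sH sV (\<lambda>x. G [a, b, x])) \<Longrightarrow> k_multilinear sH sV (Suc (Suc 0)) G"
  unfolding k_multilinear_def by (auto simp: length_Suc_conv le_Suc_eq)

lemma k_multilinear_len4I:
  "(\<And>b c d. k_linear sH sV (\<lambda>x. G [x, b, c, d])) \<Longrightarrow> (\<And>a c d. k_linear sH sV (\<lambda>x. G [a, x, c, d]))
   \<Longrightarrow> (\<And>a b d. k_linear sH sV (\<lambda>x. G [a, b, x, d])) \<Longrightarrow> (\<And>a b c. k_linear sH sV (\<lambda>x. G [a, b, c, x]))
   \<Longrightarrow> k_multilinear sH sV (Suc (Suc (Suc 0))) G"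
  unfolding k_multilinear_def by (auto simp: length_Suc_conv le_Suc_eq)

lemma k_multilinear_len5I:
  "(\<And>b c d e. k_linear sH sV (\<lambda>x. G [x, b, c, d, e])) \<Longrightarrow> (\<And>a c d e. k_linear sH sV (\<lambda>x. G [a, x, c, d, e]))
   \<Longrightarrow> (\<And>a b d e. k_linear sH sV (\<lambda>x. G [a, b, x, d, e])) \<Longrightarrow> (\<And>a b c e. k_linear sH sV (\<lambda>x. G [a, b, c, x, e]))
   \<Longrightarrow> (\<And>a b c d. k_linear sH sV (\<lambda>x. G [a, b, c, d, x]))
   \<Longrightarrow> k_multilinear sH sV (Suc (Suc (Suc (Suc 0)))) G"
  unfolding k_multilinear_def by (auto simp: length_Suc_conv le_Suc_eq)

locale hopf =
  fixes scH :: "'k::field \<Rightarrow> 'h::ring_1 \<Rightarrow> 'h" and sw :: "'h \<Rightarrow> ('h \<times> 'h) list"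
    and eps :: "'h \<Rightarrow> 'k" and S :: "'h \<Rightarrow> 'h"
  assumes hopf_algebra: "hopf_algebra scH sw eps S"
begin

lemma k_algebra_H: "k_algebra scH"
  using hopf_algebra by (simp add: hopf_algebra_def)

lemma vector_space_H: "vector_space scH"
  using k_algebra_H by (simp add: k_algebra_def)

lemma k_linear_eps: "k_linear scH (*) eps"
  using hopf_algebra by (simp add: hopf_algebra_def k_linear_if_linear)

lemma k_linear_S: "k_linear scH scH S"
  using hopf_algebra by (simp add: hopf_algebra_def k_linear_if_linear)

lemma eps_mult: "eps (x * y) = eps x * eps y"
  using hopf_algebra by (simp add: hopf_algebra_def)

lemma eps_one: "eps 1 = 1"
  using hopf_algebra by (simp add: hopf_algebra_def)

lemma coproduct_add: "teq2 scH scH (sw (x + y)) (sw x @ sw y)"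
  using hopf_algebra by (simp add: hopf_algebra_def)

lemma coproduct_scale: "teq2 scH scH (sw (scH c x)) (map (\<lambda>(a, b). (scH c a, b)) (sw x))"
  using hopf_algebra by (simp add: hopf_algebra_def)

lemma coproduct_mult:
  "teq2 scH scH (sw (x * y)) (concat (map (\<lambda>(a, b). map (\<lambda>(c, d). (a * c, b * d)) (sw y)) (sw x)))"
  using hopf_algebra by (simp add: hopf_algebra_def)

lemma coproduct_one: "teq2 scH scH (sw 1) [(1, 1)]"
  using hopf_algebra by (simp add: hopf_algebra_def)

lemma coproduct_coassoc: "teq3 scH scH scH
    (concat (map (\<lambda>(a, b). map (\<lambda>(a1, a2). (a1, a2, b)) (sw a)) (sw h)))
    (concat (map (\<lambda>(a, b). map (\<lambda>(b1, b2). (a, b1, b2)) (sw b)) (sw h)))"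
  using hopf_algebra by (simp add: hopf_algebra_def)

lemma counit_left: "sweedler_sum sw h (\<lambda>a b. scH (eps a) b) = h"
  using hopf_algebra by (simp add: hopf_algebra_def sweedler_sum_def tensor_apply_def split_def)

lemma counit_right: "sweedler_sum sw h (\<lambda>a b. scH (eps b) a) = h"
  using hopf_algebra by (simp add: hopf_algebra_def sweedler_sum_def tensor_apply_def split_def)

lemma antipode_left: "sweedler_sum sw h (\<lambda>a b. S a * b) = scH (eps h) 1"
  using hopf_algebra by (simp add: hopf_algebra_def sweedler_sum_def tensor_apply_def split_def)

lemma antipode_right: "sweedler_sum sw h (\<lambda>a b. a * S b) = scH (eps h) 1"
  using hopf_algebra by (simp add: hopf_algebra_def sweedler_sum_def tensor_apply_def split_def)

lemma counit_right_linear: "k_linear scH sV L \<Longrightarrow> sweedler_sum sw h (\<lambda>a b. sV (eps b) (L a)) = L h"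
  using sweedler_sum_linear[of scH sV L sw h "\<lambda>a b. scH (eps b) a"] by (simp add: counit_right k_linear_scale)

lemma k_linear_S_comp: "k_linear s1 scH f \<Longrightarrow> k_linear s1 scH (\<lambda>x. S (f x))"
  using k_linear_comp[OF k_linear_S] .

lemma k_linear_eps_comp: "k_linear s1 scH f \<Longrightarrow> k_linear s1 (*) (\<lambda>x. eps (f x))"
  using k_linear_comp[OF k_linear_eps] .

context
  fixes sV :: "'k \<Rightarrow> 'v::ab_group_add \<Rightarrow> 'v" and F :: "'h \<Rightarrow> 'h \<Rightarrow> 'v"
  assumes vs: "vector_space sV"
    and F1: "\<And>b. k_linear scH sV (\<lambda>a. F a b)" and F2: "\<And>a. k_linear scH sV (F a)"
begin

private lemma k_bilinear_F: "k_bilinear scH scH sV F"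
  using F1 F2 by (simp add: k_bilinear_def)

lemma k_linear_sweedler_sum_arg: "k_linear scH sV (\<lambda>h. sweedler_sum sw h F)"
proof -
  have "sweedler_sum sw (x + y) F = sweedler_sum sw x F + sweedler_sum sw y F" for x y
    using teq2_imp_tensor_apply_eq[OF vs k_bilinear_F coproduct_add] by (simp add: sweedler_sum_def tensor_apply_def)
  moreover have "sweedler_sum sw (scH c x) F = sV c (sweedler_sum sw x F)" for c x
  proof -
    have "sweedler_sum sw (scH c x) F = sweedler_sum sw x (\<lambda>a b. F (scH c a) b)"
      using teq2_imp_tensor_apply_eq[OF vs k_bilinear_F coproduct_scale]
      by (simp add: sweedler_sum_def tensor_apply_def split_def o_def)
    then show ?thesis
      by (simp add: k_linear_scale[OF F1] sweedler_sum_linear[OF k_linear_scale_right[OF vs k_linear_id]])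
  qed
  ultimately show ?thesis by (simp add: k_linear_def)
qed

lemma sweedler_sum_mult:
  "sweedler_sum sw (x * y) F = sweedler_sum sw x (\<lambda>a b. sweedler_sum sw y (\<lambda>c d. F (a * c) (b * d)))"
  using teq2_imp_tensor_apply_eq[OF vs k_bilinear_F coproduct_mult]
  by (simp add: sweedler_sum_def tensor_apply_def sum_list_concat_map split_def o_def)

lemma sweedler_sum_one: "sweedler_sum sw 1 F = F 1 1"
  using teq2_imp_tensor_apply_eq[OF vs k_bilinear_F coproduct_one] by (simp add: sweedler_sum_def tensor_apply_def)

end

lemma k_linear_sweedler_sum_arg_comp:
  "vector_space sV \<Longrightarrow> (\<And>b. k_linear scH sV (\<lambda>a. F a b)) \<Longrightarrow> (\<And>a. k_linear scH sV (F a))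
   \<Longrightarrow> k_linear s1 scH f \<Longrightarrow> k_linear s1 sV (\<lambda>x. sweedler_sum sw (f x) F)"
  using k_linear_comp[OF k_linear_sweedler_sum_arg] by blast

lemma sweedler_sum_coassoc:
  assumes vs: "vector_space sV" and "\<And>y z. k_linear scH sV (\<lambda>x. G x y z)"
    and "\<And>x z. k_linear scH sV (\<lambda>y. G x y z)" and "\<And>x y. k_linear scH sV (G x y)"
  shows "sweedler_sum sw h (\<lambda>a b. sweedler_sum sw a (\<lambda>c d. G c d b))
       = sweedler_sum sw h (\<lambda>a b. sweedler_sum sw b (\<lambda>c d. G a c d))"
proof -
  have "k_trilinear scH scH scH sV G" using assms(2-4) by (simp add: k_trilinear_def)
  then show ?thesis
    using teq3_imp_sum_eq[OF vs _ coproduct_coassoc[of h]]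
    by (simp add: sweedler_sum_def tensor_apply_def sum_list_concat_map split_def o_def)
qed

lemma k_linear_iter_sweedler_sum_arg:
  assumes vs: "vector_space sV" and "k_multilinear scH sV n G"
  shows "k_linear scH sV (\<lambda>h. iter_sweedler_sum sw n h G)"
  using assms(2)
proof (induction n arbitrary: G)
  case 0
  have "k_linear scH sV (\<lambda>x. G ([0][0 := x]))" by (rule k_multilinearD[OF 0]) auto
  then show ?case by (simp add: iter_sweedler_sum_0)
next
  case (Suc n)
  show ?case unfolding iter_sweedler_sum_Suc
  proof (rule k_linear_sweedler_sum_arg[OF vs])
    fix b show "k_linear scH sV (\<lambda>a. iter_sweedler_sum sw n b (\<lambda>t. G (a # t)))"
      by (rule k_linear_iter_sweedler_sum_fun[OF vs]) (rule k_multilinear_head[OF Suc.prems])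
  next
    fix a show "k_linear scH sV (\<lambda>b. iter_sweedler_sum sw n b (\<lambda>t. G (a # t)))"
      by (rule Suc.IH, rule k_multilinear_Cons[OF Suc.prems])
  qed
qed

lemma k_linear_iter_sweedler_sum_arg_comp:
  "vector_space sV \<Longrightarrow> k_multilinear scH sV n G \<Longrightarrow> k_linear s1 scH f
   \<Longrightarrow> k_linear s1 sV (\<lambda>x. iter_sweedler_sum sw n (f x) G)"
  using k_linear_comp[OF k_linear_iter_sweedler_sum_arg] by blast

lemmas k_linear_intros = k_linear_id k_linear_add_fun k_linear_sweedler_sum_fun k_linear_iter_sweedler_sum_fun
  k_linear_scale_right k_linear_scale_left k_linear_mult_right k_linear_mult_left k_linear_S_comp
  k_linear_eps_comp k_linear_sweedler_sum_arg_comp k_linear_iter_sweedler_sum_arg_comp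
  k_multilinear_len2I k_multilinear_len3I k_multilinear_len4I k_multilinear_len5I
  k_algebra_H k_algebra_field vector_space_H vector_space_field

text \<open>Generalised coassociativity: whichever factor of \<open>h\<^sub>1 \<otimes> \<dots> \<otimes> h\<^sub>n\<^sub>+\<^sub>1\<close> is split, the result is the
  next iterated coproduct.\<close>
lemma iter_sweedler_sum_coassoc:
  assumes vs: "vector_space sV" and "k_multilinear scH sV (Suc n) G" and "i \<le> n"
  shows "iter_sweedler_sum sw n h (\<lambda>t. sweedler_sum sw (t ! i) (\<lambda>a b. G (take i t @ a # b # drop (Suc i) t)))
       = iter_sweedler_sum sw (Suc n) h G"
  using assms(2,3)
proof (induction n arbitrary: i G h)
  case 0
  then show ?case by (simp add: iter_sweedler_sum_1 iter_sweedler_sum_0)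
next
  case (Suc m)
  note G = Suc.prems(1)
  show ?case
  proof (cases i)
    case 0
    have "iter_sweedler_sum sw (Suc m) h (\<lambda>t. sweedler_sum sw (t ! i) (\<lambda>a b. G (take i t @ a # b # drop (Suc i) t)))
        = sweedler_sum sw h (\<lambda>a0 b0. sweedler_sum sw a0 (\<lambda>a b. iter_sweedler_sum sw m b0 (\<lambda>t. G (a # b # t))))"
      using 0 by (simp add: iter_sweedler_sum_Suc iter_sweedler_sum_sweedler_sum_commute)
    also have "\<dots> = sweedler_sum sw h (\<lambda>a0 b0. sweedler_sum sw b0 (\<lambda>c d. iter_sweedler_sum sw m d (\<lambda>t. G (a0 # c # t))))"
    proof (rule sweedler_sum_coassoc[OF vs])
      fix y z show "k_linear scH sV (\<lambda>x. iter_sweedler_sum sw m z (\<lambda>t. G (x # y # t)))"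
        by (rule k_linear_iter_sweedler_sum_fun[OF vs], rule k_multilinear_head[OF G]) simp
    next
      fix x z show "k_linear scH sV (\<lambda>y. iter_sweedler_sum sw m z (\<lambda>t. G (x # y # t)))"
        by (rule k_linear_iter_sweedler_sum_fun[OF vs], rule k_multilinear_head[OF k_multilinear_Cons[OF G]]) simp
    next
      fix x y show "k_linear scH sV (\<lambda>z. iter_sweedler_sum sw m z (\<lambda>t. G (x # y # t)))"
        by (rule k_linear_iter_sweedler_sum_arg[OF vs], rule k_multilinear_Cons, rule k_multilinear_Cons, rule G)
    qed
    also have "\<dots> = iter_sweedler_sum sw (Suc (Suc m)) h G"
      by (simp add: iter_sweedler_sum_Suc)
    finally show ?thesis .
  next
    case (Suc j)
    then show ?thesis
      using Suc.IH[OF k_multilinear_Cons[OF G]] Suc.prems(2) by (simp add: iter_sweedler_sum_Suc)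
  qed
qed

lemma iter_sweedler_sum_split:
  assumes vs: "vector_space sV" and "k_multilinear scH sV (Suc n) G" and "i \<le> n"
    and "\<And>t. length t = Suc n \<Longrightarrow> H t = sweedler_sum sw (t ! i) (\<lambda>a b. G (take i t @ a # b # drop (Suc i) t))"
  shows "iter_sweedler_sum sw n h H = iter_sweedler_sum sw (Suc n) h G"
  using iter_sweedler_sum_coassoc[OF assms(1-3), of h] iter_sweedler_sum_cong[of n H, OF assms(4)] by simp

lemma iter_sweedler_sum_contract:
  assumes vs: "vector_space sV" and H: "k_multilinear scH sV (Suc n) H" and W: "k_multilinear scH sV n W"
    and i: "i \<le> n" and M: "\<And>x. sweedler_sum sw x M = L x"
    and H_eq: "\<And>t. length t = Suc (Suc n) \<Longrightarrow> H t = W (take i t @ M (t ! i) (t ! Suc i) # drop (Suc (Suc i)) t)"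
    and W'_eq: "\<And>t. length t = Suc n \<Longrightarrow> W' t = W (t[i := L (t ! i)])"
  shows "iter_sweedler_sum sw (Suc n) h H = iter_sweedler_sum sw n h W'"
proof -
  have "iter_sweedler_sum sw (Suc n) h H = iter_sweedler_sum sw n h (\<lambda>t. W (t[i := sweedler_sum sw (t ! i) M]))"
  proof (rule iter_sweedler_sum_split[symmetric, OF vs H i])
    fix t :: "'h list" assume len: "length t = Suc n"
    have "sweedler_sum sw (t ! i) (\<lambda>a b. H (take i t @ a # b # drop (Suc i) t))
        = sweedler_sum sw (t ! i) (\<lambda>a b. W (t[i := M a b]))"
      using len i by (simp add: H_eq nth_append upd_conv_take_nth_drop)
    then show "W (t[i := sweedler_sum sw (t ! i) M])
        = sweedler_sum sw (t ! i) (\<lambda>a b. H (take i t @ a # b # drop (Suc i) t))"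
      by (simp only: sweedler_sum_linear[OF k_multilinearD[OF W len i]])
  qed
  also have "\<dots> = iter_sweedler_sum sw n h W'"
    by (rule iter_sweedler_sum_cong) (simp add: M W'_eq)
  finally show ?thesis .
qed

lemma iter_sweedler_sum_counit_left:
  assumes vs: "vector_space sV" and H: "k_multilinear scH sV (Suc n) H" and W: "k_multilinear scH sV n W"
    and i: "i \<le> n"
    and H_eq: "\<And>t. length t = Suc (Suc n) \<Longrightarrow> H t = sV (eps (t ! i)) (W (take i t @ drop (Suc i) t))"
  shows "iter_sweedler_sum sw (Suc n) h H = iter_sweedler_sum sw n h W"
proof (rule iter_sweedler_sum_contract[OF vs H W i counit_left])
  fix t :: "'h list" assume len: "length t = Suc (Suc n)"
  let ?u = "take i t @ drop (Suc i) t"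
  have u: "length ?u = Suc n" "?u ! i = t ! Suc i" using len i by (simp_all add: nth_append)
  have "take i t @ scH (eps (t ! i)) (t ! Suc i) # drop (Suc (Suc i)) t = ?u[i := scH (eps (t ! i)) (?u ! i)]"
  proof -
    have "drop (Suc i) t = t ! Suc i # drop (Suc (Suc i)) t" using len i by (simp add: Cons_nth_drop_Suc)
    then show ?thesis using len i by (simp add: list_update_append nth_append)
  qed
  then show "H t = W (take i t @ scH (eps (t ! i)) (t ! Suc i) # drop (Suc (Suc i)) t)"
    using k_linear_scale[OF k_multilinearD[OF W u(1) i]] by (simp add: H_eq[OF len])
qed simp

lemma iter_sweedler_sum_counit_right:
  assumes vs: "vector_space sV" and H: "k_multilinear scH sV (Suc n) H" and W: "k_multilinear scH sV n W"
    and i: "i \<le> n"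
    and H_eq: "\<And>t. length t = Suc (Suc n) \<Longrightarrow> H t = sV (eps (t ! Suc i)) (W (take (Suc i) t @ drop (Suc (Suc i)) t))"
  shows "iter_sweedler_sum sw (Suc n) h H = iter_sweedler_sum sw n h W"
proof (rule iter_sweedler_sum_contract[OF vs H W i counit_right])
  fix t :: "'h list" assume len: "length t = Suc (Suc n)"
  let ?u = "take (Suc i) t @ drop (Suc (Suc i)) t"
  have u: "length ?u = Suc n" "?u ! i = t ! i" using len i by (simp_all add: nth_append)
  have "take i t @ scH (eps (t ! Suc i)) (t ! i) # drop (Suc (Suc i)) t = ?u[i := scH (eps (t ! Suc i)) (?u ! i)]"
    using len i by (simp add: u(2) list_update_append take_Suc_conv_app_nth nth_append)
  then show "H t = W (take i t @ scH (eps (t ! Suc i)) (t ! i) # drop (Suc (Suc i)) t)"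
    using k_linear_scale[OF k_multilinearD[OF W u(1) i]] by (simp add: H_eq[OF len])
qed simp

lemma antipode_one: "S 1 = 1"
proof -
  have "sweedler_sum sw 1 (\<lambda>a b. S a * b) = S 1 * 1"
    by (rule sweedler_sum_one[OF vector_space_H]) (auto intro!: k_linear_intros)
  then show ?thesis
    using antipode_left[of 1] by (simp add: eps_one vector_space.vector_space_assms(4)[OF vector_space_H])
qed

lemma eps_antipode: "eps (S h) = eps h"
proof -
  have "eps h = eps (sweedler_sum sw h (\<lambda>a b. S a * b))"
    by (simp add: antipode_left k_linear_scale[OF k_linear_eps] eps_one)
  also have "\<dots> = sweedler_sum sw h (\<lambda>a b. eps (S (scH (eps b) a)))"
    by (simp add: sweedler_sum_linear[OF k_linear_eps] eps_mult k_linear_scale[OF k_linear_eps]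
        k_linear_scale[OF k_linear_S] mult.commute)
  also have "\<dots> = eps (S h)"
    using sweedler_sum_linear[OF k_linear_comp[OF k_linear_eps k_linear_S], of sw h "\<lambda>a b. scH (eps b) a"]
    by (simp add: counit_right)
  finally show ?thesis by simp
qed

lemma antipode_mult_cancel:
  "sweedler_sum sw y (\<lambda>c d. sweedler_sum sw c (\<lambda>c1 c2. S (u * c1) * (v * c2) * (S d * w))) = S (u * y) * v * w"
proof -
  note LI = k_linear_intros
  have "sweedler_sum sw y (\<lambda>c d. sweedler_sum sw c (\<lambda>c1 c2. S (u * c1) * (v * c2) * (S d * w)))
      = iter_sweedler_sum sw (Suc 0) y (\<lambda>t. sweedler_sum sw (t ! 0) (\<lambda>c1 c2. S (u * c1) * (v * c2) * (S (t ! 1) * w)))"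
    by (simp add: iter_sweedler_sum_1)
  also have "\<dots> = iter_sweedler_sum sw (Suc (Suc 0)) y (\<lambda>t. S (u * t ! 0) * (v * t ! 1) * (S (t ! 2) * w))"
    by (rule iter_sweedler_sum_split[OF vector_space_H, where i = 0]) (auto intro!: LI simp: length_Suc_conv)
  also have "\<dots> = iter_sweedler_sum sw (Suc 0) y (\<lambda>t. S (u * t ! 0) * (v * scH (eps (t ! 1)) 1) * w)"
    by (rule iter_sweedler_sum_contract[OF vector_space_H _ _ _ antipode_right, where i = 1
          and W = "\<lambda>t. S (u * t ! 0) * (v * t ! 1) * w"])
      (auto intro!: LI simp: length_Suc_conv mult.assoc)
  also have "\<dots> = sweedler_sum sw y (\<lambda>c d. scH (eps d) (S (u * c) * v * w))"
    by (simp add: iter_sweedler_sum_1 k_algebra_mult_scale_one[OF k_algebra_H]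
        k_algebra_scale_mult_left[OF k_algebra_H, symmetric] k_algebra_scale_mult_right[OF k_algebra_H, symmetric])
  also have "\<dots> = S (u * y) * v * w"
    by (rule counit_right_linear) (auto intro!: LI)
  finally show ?thesis .
qed

lemma antipode_mult: "S (x * y) = S y * S x"
proof -
  note LI = k_linear_intros
  have S_expand: "S z = sweedler_sum sw z (\<lambda>a b. scH (eps a) (S b))" for z
    using sweedler_sum_linear[OF k_linear_S, of sw z "\<lambda>a b. scH (eps a) b"]
    by (simp add: counit_left k_linear_scale[OF k_linear_S])
  have "S y * S x = sweedler_sum sw x (\<lambda>a b. sweedler_sum sw y (\<lambda>c d. scH (eps a * eps c) (S d * S b)))"
    by (simp add: S_expand[of x] S_expand[of y] sweedler_sum_linear[OF k_linear_mult_left[OF k_algebra_H k_linear_id]]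
        sweedler_sum_linear[OF k_linear_mult_right[OF k_algebra_H k_linear_id]]
        sweedler_sum_linear[OF k_linear_scale_right[OF vector_space_H k_linear_id]]
        k_algebra_scale_mult_left[OF k_algebra_H, symmetric] k_algebra_scale_mult_right[OF k_algebra_H, symmetric]
        vector_space.vector_space_assms(3)[OF vector_space_H] mult.commute)
  also have "\<dots> = sweedler_sum sw x (\<lambda>a b. sweedler_sum sw y (\<lambda>c d.
      sweedler_sum sw a (\<lambda>a1 a2. sweedler_sum sw c (\<lambda>c1 c2. S (a1 * c1) * (a2 * c2) * (S d * S b)))))"
  proof -
    have "scH (eps (a * c)) 1 * Z = sweedler_sum sw a (\<lambda>a1 a2. sweedler_sum sw c (\<lambda>c1 c2. S (a1 * c1) * (a2 * c2) * Z))"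
      for a c Z
      unfolding antipode_left[symmetric] sweedler_sum_linear[OF k_linear_mult_right[OF k_algebra_H k_linear_id]]
      by (rule sweedler_sum_mult[OF vector_space_H]) (auto intro!: LI)
    then show ?thesis by (simp add: eps_mult k_algebra_scale_one_mult[OF k_algebra_H])
  qed
  also have "\<dots> = iter_sweedler_sum sw (Suc 0) x (\<lambda>s. sweedler_sum sw (s ! 0) (\<lambda>a1 a2. sweedler_sum sw y (\<lambda>c d.
      sweedler_sum sw c (\<lambda>c1 c2. S (a1 * c1) * (a2 * c2) * (S d * S (s ! 1))))))"
    by (simp add: iter_sweedler_sum_1 sweedler_sum_commute[of sw y])
  also have "\<dots> = iter_sweedler_sum sw (Suc (Suc 0)) x (\<lambda>s. sweedler_sum sw y (\<lambda>c d.
      sweedler_sum sw c (\<lambda>c1 c2. S (s ! 0 * c1) * (s ! 1 * c2) * (S d * S (s ! 2)))))"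
    by (rule iter_sweedler_sum_split[OF vector_space_H, where i = 0]) (auto intro!: LI simp: length_Suc_conv)
  also have "\<dots> = iter_sweedler_sum sw (Suc (Suc 0)) x (\<lambda>s. S (s ! 0 * y) * s ! 1 * S (s ! 2))"
    by (simp only: antipode_mult_cancel)
  also have "\<dots> = iter_sweedler_sum sw (Suc 0) x (\<lambda>s. S (s ! 0 * y) * scH (eps (s ! 1)) 1)"
    by (rule iter_sweedler_sum_contract[OF vector_space_H _ _ _ antipode_right, where i = 1
          and W = "\<lambda>s. S (s ! 0 * y) * s ! 1"])
      (auto intro!: LI simp: length_Suc_conv mult.assoc)
  also have "\<dots> = sweedler_sum sw x (\<lambda>a b. scH (eps b) (S (a * y)))"
    by (simp add: iter_sweedler_sum_1 k_algebra_mult_scale_one[OF k_algebra_H])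
  also have "\<dots> = S (x * y)"
    by (rule counit_right_linear) (auto intro!: LI)
  finally show ?thesis by simp
qed

lemma eps_scale_expand:
  assumes vs: "vector_space sV"
    and F1: "\<And>b. k_linear scH sV (\<lambda>a. F a b)" and F2: "\<And>a. k_linear scH sV (F a)"
  shows "sV (eps g) (F u v) = sweedler_sum sw g (\<lambda>a b. sweedler_sum sw a (\<lambda>a1 a2.
           sweedler_sum sw (S b) (\<lambda>r1 r2. F (u * (a1 * r1)) (v * (a2 * r2)))))"
proof -
  note LI = k_linear_intros k_linear_comp[OF F1] k_linear_comp[OF F2] vs
  let ?F = "\<lambda>p q. F (u * p) (v * q)"
  have L: "k_linear scH sV (\<lambda>x. sweedler_sum sw x ?F)"
    by (rule k_linear_sweedler_sum_arg[OF vs]) (auto intro!: LI)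
  have "sV (eps g) (F u v) = sV (eps g) (sweedler_sum sw 1 ?F)"
    by (subst sweedler_sum_one[OF vs]) (auto intro!: LI)
  also have "\<dots> = sweedler_sum sw (sweedler_sum sw g (\<lambda>a b. a * S b)) ?F"
    by (simp add: antipode_right k_linear_scale[OF L])
  also have "\<dots> = sweedler_sum sw g (\<lambda>a b. sweedler_sum sw (a * S b) ?F)"
    by (simp only: sweedler_sum_linear[OF L])
  also have "\<dots> = sweedler_sum sw g (\<lambda>a b. sweedler_sum sw a (\<lambda>a1 a2.
           sweedler_sum sw (S b) (\<lambda>r1 r2. F (u * (a1 * r1)) (v * (a2 * r2)))))"
    by (subst sweedler_sum_mult[OF vs]) (auto intro!: LI)
  finally show ?thesis .
qed

lemma sweedler_sum_antipode_expand:
  assumes vs: "vector_space sV"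
    and F1: "\<And>b. k_linear scH sV (\<lambda>a. F a b)" and F2: "\<And>a. k_linear scH sV (F a)"
  shows "sweedler_sum sw h (\<lambda>a b. F (S a) (S b)) = iter_sweedler_sum sw (Suc (Suc 0)) h (\<lambda>t.
           sweedler_sum sw (S (t ! 1)) (\<lambda>r1 r2. F r1 (S (t ! 2) * (t ! 0 * r2))))"
proof -
  note LI = k_linear_intros k_linear_comp[OF F1] k_linear_comp[OF F2] vs
  have "sweedler_sum sw h (\<lambda>a b. F (S a) (S b)) = iter_sweedler_sum sw (Suc 0) h (\<lambda>t. F (S (t ! 0)) (S (t ! 1)))"
    by (simp add: iter_sweedler_sum_1)
  also have "\<dots> = iter_sweedler_sum sw (Suc (Suc 0)) h (\<lambda>t. sV (eps (t ! 1)) (F (S (t ! 0)) (S (t ! 2))))"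
    by (rule iter_sweedler_sum_counit_left[OF vs, where i = 1, symmetric]) (auto intro!: LI simp: length_Suc_conv)
  also have "\<dots> = iter_sweedler_sum sw (Suc (Suc 0)) h (\<lambda>t. sweedler_sum sw (t ! 1) (\<lambda>a b. sweedler_sum sw a (\<lambda>a1 a2.
      sweedler_sum sw (S b) (\<lambda>r1 r2. F (S (t ! 0) * (a1 * r1)) (S (t ! 2) * (a2 * r2))))))"
    by (rule iter_sweedler_sum_cong) (rule eps_scale_expand[OF vs F1 F2])
  also have "\<dots> = iter_sweedler_sum sw (Suc (Suc (Suc 0))) h (\<lambda>t. sweedler_sum sw (t ! 1) (\<lambda>a1 a2.
      sweedler_sum sw (S (t ! 2)) (\<lambda>r1 r2. F (S (t ! 0) * (a1 * r1)) (S (t ! 3) * (a2 * r2)))))"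
    by (rule iter_sweedler_sum_split[OF vs, where i = 1]) (auto intro!: LI simp: length_Suc_conv)
  also have "\<dots> = iter_sweedler_sum sw (Suc (Suc (Suc (Suc 0)))) h (\<lambda>t.
      sweedler_sum sw (S (t ! 3)) (\<lambda>r1 r2. F (S (t ! 0) * (t ! 1 * r1)) (S (t ! 4) * (t ! 2 * r2))))"
    by (rule iter_sweedler_sum_split[OF vs, where i = 1]) (auto intro!: LI simp: length_Suc_conv)
  also have "\<dots> = iter_sweedler_sum sw (Suc (Suc (Suc 0))) h (\<lambda>t.
      sweedler_sum sw (S (t ! 2)) (\<lambda>r1 r2. F (scH (eps (t ! 0)) 1 * r1) (S (t ! 3) * (t ! 1 * r2))))"
    by (rule iter_sweedler_sum_contract[OF vs _ _ _ antipode_left, where i = 0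
          and W = "\<lambda>u. sweedler_sum sw (S (u ! 2)) (\<lambda>r1 r2. F (u ! 0 * r1) (S (u ! 3) * (u ! 1 * r2)))"])
      (auto intro!: LI simp: length_Suc_conv mult.assoc)
  also have "\<dots> = iter_sweedler_sum sw (Suc (Suc (Suc 0))) h (\<lambda>t.
      sV (eps (t ! 0)) (sweedler_sum sw (S (t ! 2)) (\<lambda>r1 r2. F r1 (S (t ! 3) * (t ! 1 * r2)))))"
    by (rule iter_sweedler_sum_cong)
      (simp add: k_algebra_scale_one_mult[OF k_algebra_H] k_linear_scale[OF F1]
        sweedler_sum_linear[OF k_linear_scale_right[OF vs k_linear_id]])
  also have "\<dots> = iter_sweedler_sum sw (Suc (Suc 0)) h (\<lambda>t.
      sweedler_sum sw (S (t ! 1)) (\<lambda>r1 r2. F r1 (S (t ! 2) * (t ! 0 * r2))))"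
    by (rule iter_sweedler_sum_counit_left[OF vs, where i = 0]) (auto intro!: LI simp: length_Suc_conv)
  finally show ?thesis .
qed

end

subsection \<open>Cocommutative Hopf algebras\<close>

locale cocommutative_hopf = hopf scH sw eps S
  for scH :: "'k::field \<Rightarrow> 'h::ring_1 \<Rightarrow> 'h" and sw eps S +
  assumes cocommutative: "cocommutative scH sw"
begin

lemma sweedler_sum_cocomm:
  assumes vs: "vector_space sV"
    and F1: "\<And>b. k_linear scH sV (\<lambda>a. F a b)" and F2: "\<And>a. k_linear scH sV (F a)"
  shows "sweedler_sum sw h F = sweedler_sum sw h (\<lambda>a b. F b a)"
proof -
  have "k_bilinear scH scH sV F" using F1 F2 by (simp add: k_bilinear_def)
  moreover have "teq2 scH scH (sw h) (map prod.swap (sw h))"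
    using cocommutative by (simp add: cocommutative_def)
  ultimately have "tensor_apply F (sw h) = tensor_apply F (map prod.swap (sw h))"
    by (rule teq2_imp_tensor_apply_eq[OF vs])
  then show ?thesis by (simp add: sweedler_sum_def tensor_apply_def split_def o_def)
qed

lemma antipode_left_swapped: "sweedler_sum sw h (\<lambda>a b. S b * a) = scH (eps h) 1"
proof -
  have "sweedler_sum sw h (\<lambda>a b. S b * a) = sweedler_sum sw h (\<lambda>a b. S a * b)"
    by (rule sweedler_sum_cocomm[OF vector_space_H]) (auto intro!: k_linear_intros)
  then show ?thesis by (simp add: antipode_left)
qed

lemma antipode_right_swapped: "sweedler_sum sw h (\<lambda>a b. b * S a) = scH (eps h) 1"
proof -
  have "sweedler_sum sw h (\<lambda>a b. b * S a) = sweedler_sum sw h (\<lambda>a b. a * S b)"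
    by (rule sweedler_sum_cocomm[OF vector_space_H]) (auto intro!: k_linear_intros)
  then show ?thesis by (simp add: antipode_right)
qed

lemma iter_sweedler_sum_swap:
  fixes G G' :: "'h list \<Rightarrow> 'v::ab_group_add"
  assumes vs: "vector_space sV" and G: "k_multilinear scH sV (Suc n) G" and G': "k_multilinear scH sV (Suc n) G'"
    and i: "i \<le> n" and G'_eq: "\<And>t. length t = Suc (Suc n) \<Longrightarrow> G' t = G (t[i := t ! Suc i, Suc i := t ! i])"
  shows "iter_sweedler_sum sw (Suc n) h G = iter_sweedler_sum sw (Suc n) h G'"
proof -
  let ?t = "\<lambda>t a b. take i t @ a # b # drop (Suc i) t"
  have "iter_sweedler_sum sw (Suc n) h G = iter_sweedler_sum sw n h (\<lambda>t. sweedler_sum sw (t ! i) (\<lambda>a b. G (?t t a b)))"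
    by (rule iter_sweedler_sum_split[OF vs G i, symmetric]) simp
  also have "\<dots> = iter_sweedler_sum sw n h (\<lambda>t. sweedler_sum sw (t ! i) (\<lambda>a b. G (?t t b a)))"
  proof (rule iter_sweedler_sum_cong, rule sweedler_sum_cocomm[OF vs])
    fix t :: "'h list" and a b assume len: "length t = Suc n"
    show "k_linear scH sV (\<lambda>a. G (?t t a b))"
      by (rule k_multilinear_at[OF G, of "?t t 0 b" i]) (use len i in \<open>auto simp: list_update_append\<close>)
    show "k_linear scH sV (\<lambda>b. G (?t t a b))"
      by (rule k_multilinear_at[OF G, of "?t t a 0" "Suc i"]) (use len i in \<open>auto simp: list_update_append\<close>)
  qed
  also have "\<dots> = iter_sweedler_sum sw n h (\<lambda>t. sweedler_sum sw (t ! i) (\<lambda>a b. G' (?t t a b)))"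
    using i by (intro iter_sweedler_sum_cong) (simp add: G'_eq nth_append list_update_append)
  also have "\<dots> = iter_sweedler_sum sw (Suc n) h G'"
    by (rule iter_sweedler_sum_split[OF vs G' i]) simp
  finally show ?thesis .
qed

lemma sweedler_sum_antipode:
  assumes vs: "vector_space sV"
    and F1: "\<And>b. k_linear scH sV (\<lambda>a. F a b)" and F2: "\<And>a. k_linear scH sV (F a)"
  shows "sweedler_sum sw (S h) F = sweedler_sum sw h (\<lambda>a b. F (S a) (S b))"
proof -
  note LI = k_linear_intros k_linear_comp[OF F1] k_linear_comp[OF F2] vs
  have L: "k_linear scH sV (\<lambda>x. sweedler_sum sw (S x) F)" by (auto intro!: LI)
  have "sweedler_sum sw h (\<lambda>a b. F (S a) (S b)) = iter_sweedler_sum sw (Suc (Suc 0)) h (\<lambda>t.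
      sweedler_sum sw (S (t ! 0)) (\<lambda>r1 r2. F r1 (S (t ! 2) * (t ! 1 * r2))))"
    unfolding sweedler_sum_antipode_expand[OF vs F1 F2]
    by (rule iter_sweedler_sum_swap[OF vs, where i = 0]) (auto intro!: LI simp: length_Suc_conv)
  also have "\<dots> = iter_sweedler_sum sw (Suc 0) h (\<lambda>t.
      sweedler_sum sw (S (t ! 0)) (\<lambda>r1 r2. F r1 (scH (eps (t ! 1)) 1 * r2)))"
    by (rule iter_sweedler_sum_contract[OF vs _ _ _ antipode_left_swapped, where i = 1
          and W = "\<lambda>u. sweedler_sum sw (S (u ! 0)) (\<lambda>r1 r2. F r1 (u ! 1 * r2))"])
      (auto intro!: LI simp: length_Suc_conv mult.assoc)
  also have "\<dots> = sweedler_sum sw h (\<lambda>a b. sV (eps b) (sweedler_sum sw (S a) F))"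
    by (simp add: iter_sweedler_sum_1 k_algebra_scale_one_mult[OF k_algebra_H] k_linear_scale[OF F2]
        sweedler_sum_linear[OF k_linear_scale_right[OF vs k_linear_id]])
  also have "\<dots> = sweedler_sum sw (S h) F"
    by (rule counit_right_linear[OF L])
  finally show ?thesis by simp
qed

end

subsection \<open>The conjugation action\<close>

locale cocommutative_hopf_bimodule = cocommutative_hopf scH sw eps S
  for scH :: "'k::field \<Rightarrow> 'h::ring_1 \<Rightarrow> 'h" and sw eps S +
  fixes scA :: "'k \<Rightarrow> 'a::ring_1 \<Rightarrow> 'a" and lact :: "'h \<Rightarrow> 'a \<Rightarrow> 'a" and ract :: "'a \<Rightarrow> 'h \<Rightarrow> 'a"
  assumes bimodule_algebra: "bimodule_algebra scH sw eps scA lact ract"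
begin

lemma k_algebra_A: "k_algebra scA"
  using bimodule_algebra by (simp add: bimodule_algebra_def)

lemma vector_space_A: "vector_space scA"
  using k_algebra_A by (simp add: k_algebra_def)

lemma k_linear_lact: "k_linear scA scA (lact h)"
  using bimodule_algebra by (simp add: bimodule_algebra_def k_linear_if_linear)

lemma k_linear_lact_arg: "k_linear scH scA (\<lambda>h. lact h a)"
  using bimodule_algebra by (simp add: bimodule_algebra_def k_linear_if_linear)

lemma k_linear_ract: "k_linear scA scA (\<lambda>a. ract a h)"
  using bimodule_algebra by (simp add: bimodule_algebra_def k_linear_if_linear)

lemma k_linear_ract_arg: "k_linear scH scA (ract a)"
  using bimodule_algebra by (simp add: bimodule_algebra_def k_linear_if_linear)

lemma lact_mult: "lact (x * y) a = lact x (lact y a)"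
  using bimodule_algebra by (simp add: bimodule_algebra_def)

lemma lact_one: "lact 1 a = a"
  using bimodule_algebra by (simp add: bimodule_algebra_def)

lemma ract_mult: "ract a (x * y) = ract (ract a x) y"
  using bimodule_algebra by (simp add: bimodule_algebra_def)

lemma ract_one: "ract a 1 = a"
  using bimodule_algebra by (simp add: bimodule_algebra_def)

lemma ract_lact: "ract (lact x a) y = lact x (ract a y)"
  using bimodule_algebra by (simp add: bimodule_algebra_def)

lemma lact_prod: "lact h (a * b) = sweedler_sum sw h (\<lambda>h1 h2. lact h1 a * lact h2 b)"
  using bimodule_algebra by (simp add: bimodule_algebra_def sweedler_sum_def tensor_apply_def split_def)

lemma ract_prod: "ract (a * b) h = sweedler_sum sw h (\<lambda>h1 h2. ract a h1 * ract b h2)"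
  using bimodule_algebra by (simp add: bimodule_algebra_def sweedler_sum_def tensor_apply_def split_def)

lemma lact_unit: "lact h 1 = scA (eps h) 1"
  using bimodule_algebra by (simp add: bimodule_algebra_def)

lemma ract_unit: "ract 1 h = scA (eps h) 1"
  using bimodule_algebra by (simp add: bimodule_algebra_def)

lemma ract_scale_one: "ract a (scH c 1) = scA c a"
  by (simp add: k_linear_scale[OF k_linear_ract_arg] ract_one)

lemma k_linear_lact_comp: "k_linear s1 scA f \<Longrightarrow> k_linear s1 scA (\<lambda>x. lact h (f x))"
  using k_linear_comp[OF k_linear_lact] .

lemma k_linear_lact_arg_comp: "k_linear s1 scH f \<Longrightarrow> k_linear s1 scA (\<lambda>x. lact (f x) a)"
  using k_linear_comp[OF k_linear_lact_arg] .

lemma k_linear_ract_comp: "k_linear s1 scA f \<Longrightarrow> k_linear s1 scA (\<lambda>x. ract (f x) h)"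
  using k_linear_comp[OF k_linear_ract] .

lemma k_linear_ract_arg_comp: "k_linear s1 scH f \<Longrightarrow> k_linear s1 scA (\<lambda>x. ract a (f x))"
  using k_linear_comp[OF k_linear_ract_arg] .

lemmas k_linear_intros_A = k_linear_intros k_linear_lact_comp k_linear_lact_arg_comp
  k_linear_ract_comp k_linear_ract_arg_comp k_algebra_A vector_space_A

abbreviation act :: "'h \<Rightarrow> 'a \<Rightarrow> 'a" where
  "act \<equiv> conj_action sw S lact ract"

lemma act_sweedler: "act h a = sweedler_sum sw h (\<lambda>b c. ract (lact b a) (S c))"
  by (simp add: conj_action_def sweedler_sum_def tensor_apply_def)

lemma act_mult: "act (x * y) a = act x (act y a)"
proof -
  have L: "k_linear scA scA (\<lambda>w. ract (lact a1 w) (S a2))" for a1 a2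
    by (auto intro!: k_linear_intros_A)
  have "act (x * y) a
      = sweedler_sum sw x (\<lambda>a1 a2. sweedler_sum sw y (\<lambda>c1 c2. ract (lact (a1 * c1) a) (S (a2 * c2))))"
    unfolding act_sweedler by (rule sweedler_sum_mult[OF vector_space_A]) (auto intro!: k_linear_intros_A)
  also have "\<dots> = sweedler_sum sw x (\<lambda>a1 a2. sweedler_sum sw y (\<lambda>c1 c2. ract (lact a1 (ract (lact c1 a) (S c2))) (S a2)))"
    by (simp add: lact_mult antipode_mult ract_mult ract_lact)
  also have "\<dots> = act x (act y a)"
    by (simp add: act_sweedler sweedler_sum_linear[OF L])
  finally show ?thesis .
qed

lemma act_one: "act 1 a = a"
proof -
  have "act 1 a = ract (lact 1 a) (S 1)"
    unfolding act_sweedler by (rule sweedler_sum_one[OF vector_space_A]) (auto intro!: k_linear_intros_A)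
  then show ?thesis by (simp add: lact_one antipode_one ract_one)
qed

lemma act_unit: "act h 1 = scA (eps h) 1"
proof -
  have L: "k_linear scH scA (\<lambda>x. scA (eps x) 1)" by (auto intro!: k_linear_intros_A)
  have "act h 1 = sweedler_sum sw h (\<lambda>b c. scA (eps c) (scA (eps b) 1))"
    by (simp add: act_sweedler lact_unit k_linear_scale[OF k_linear_ract] ract_unit eps_antipode
        vector_space.vector_space_assms(3)[OF vector_space_A] mult.commute)
  also have "\<dots> = scA (eps h) 1"
    by (rule counit_right_linear[OF L])
  finally show ?thesis .
qed

lemma act_prod: "act h (a * b) = sweedler_sum sw h (\<lambda>c d. act c a * act d b)"
proof -
  note LI = k_linear_intros_A
  have "act h (a * b) = iter_sweedler_sum sw (Suc 0) h (\<lambda>t.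
      sweedler_sum sw (t ! 0) (\<lambda>u1 u2. ract (lact u1 a * lact u2 b) (S (t ! 1))))"
    by (simp add: act_sweedler lact_prod sweedler_sum_linear[OF k_linear_ract] iter_sweedler_sum_1)
  also have "\<dots> = iter_sweedler_sum sw (Suc (Suc 0)) h (\<lambda>t. ract (lact (t ! 0) a * lact (t ! 1) b) (S (t ! 2)))"
    by (rule iter_sweedler_sum_split[OF vector_space_A, where i = 0]) (auto intro!: LI simp: length_Suc_conv)
  also have "\<dots> = iter_sweedler_sum sw (Suc (Suc 0)) h (\<lambda>t.
      sweedler_sum sw (t ! 2) (\<lambda>p q. ract (lact (t ! 0) a) (S p) * ract (lact (t ! 1) b) (S q)))"
    unfolding ract_prod by (intro iter_sweedler_sum_cong sweedler_sum_antipode[OF vector_space_A]) (auto intro!: LI)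
  also have "\<dots> = iter_sweedler_sum sw (Suc (Suc (Suc 0))) h (\<lambda>t.
      ract (lact (t ! 0) a) (S (t ! 2)) * ract (lact (t ! 1) b) (S (t ! 3)))"
    by (rule iter_sweedler_sum_split[OF vector_space_A, where i = 2]) (auto intro!: LI simp: length_Suc_conv)
  also have "\<dots> = iter_sweedler_sum sw (Suc (Suc (Suc 0))) h (\<lambda>t.
      ract (lact (t ! 0) a) (S (t ! 1)) * ract (lact (t ! 2) b) (S (t ! 3)))"
    by (rule iter_sweedler_sum_swap[OF vector_space_A, where i = 1]) (auto intro!: LI simp: length_Suc_conv)
  also have "\<dots> = iter_sweedler_sum sw (Suc (Suc 0)) h (\<lambda>t. ract (lact (t ! 0) a) (S (t ! 1)) * act (t ! 2) b)"
    by (rule iter_sweedler_sum_split[OF vector_space_A, where i = 2, symmetric])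
      (auto intro!: LI simp: length_Suc_conv act_sweedler
        sweedler_sum_linear[OF k_linear_mult_left[OF k_algebra_A k_linear_id]])
  also have "\<dots> = iter_sweedler_sum sw (Suc 0) h (\<lambda>t. act (t ! 0) a * act (t ! 1) b)"
    by (rule iter_sweedler_sum_split[OF vector_space_A, where i = 0, symmetric])
      (auto intro!: LI simp: length_Suc_conv act_sweedler
        sweedler_sum_linear[OF k_linear_mult_right[OF k_algebra_A k_linear_id]])
  also have "\<dots> = sweedler_sum sw h (\<lambda>c d. act c a * act d b)"
    by (simp add: iter_sweedler_sum_1)
  finally show ?thesis .
qed

lemma left_module_algebra_act: "left_module_algebra scH sw eps scA act"
  unfolding left_module_algebra_def
proof (intro conjI allI)
  fix h
  have "act h = (\<lambda>a. sweedler_sum sw h (\<lambda>b c. ract (lact b a) (S c)))"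
    by (rule ext) (simp add: act_sweedler)
  then show "Vector_Spaces.linear scA scA (act h)"
    using k_linear_iff_linear[OF vector_space_A vector_space_A] by (auto intro!: k_linear_intros_A)
next
  fix a
  show "Vector_Spaces.linear scH scA (\<lambda>h. act h a)"
    using k_linear_iff_linear[OF vector_space_H vector_space_A] by (auto simp: act_sweedler intro!: k_linear_intros_A)
next
  fix h a b
  show "act h (a * b) = sum_list (map (\<lambda>(h1, h2). act h1 a * act h2 b) (sw h))"
    using act_prod by (simp add: sweedler_sum_def tensor_apply_def)
qed (simp_all add: k_algebra_A act_mult act_one act_unit)

subsection \<open>The isomorphism\<close>

lemma ract_mult_antipode: "ract (x * y) (S g) = sweedler_sum sw g (\<lambda>u v. ract x (S v) * ract y (S u))"
proof -
  have "ract (x * y) (S g) = sweedler_sum sw g (\<lambda>u v. ract x (S u) * ract y (S v))"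
    unfolding ract_prod by (rule sweedler_sum_antipode[OF vector_space_A]) (auto intro!: k_linear_intros_A)
  also have "\<dots> = sweedler_sum sw g (\<lambda>u v. ract x (S v) * ract y (S u))"
    by (rule sweedler_sum_cocomm[OF vector_space_A]) (auto intro!: k_linear_intros_A)
  finally show ?thesis .
qed

definition lr_to_smash :: "('a \<times> 'h) list \<Rightarrow> ('a \<times> 'h) list" where
  "lr_to_smash xs = concat (map (\<lambda>(\<phi>, h). map (\<lambda>(h1, h2). (ract \<phi> (S h2), h1)) (sw h)) xs)"

definition smash_to_lr :: "('a \<times> 'h) list \<Rightarrow> ('a \<times> 'h) list" where
  "smash_to_lr xs = concat (map (\<lambda>(\<phi>, h). map (\<lambda>(h1, h2). (ract \<phi> h2, h1)) (sw h)) xs)"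

lemma tensor_apply_lr_to_smash:
  "tensor_apply \<beta> (lr_to_smash xs) = tensor_apply (\<lambda>\<phi> h. sweedler_sum sw h (\<lambda>a b. \<beta> (ract \<phi> (S b)) a)) xs"
  unfolding tensor_apply_def lr_to_smash_def sweedler_sum_def by (simp add: sum_list_concat_map split_def o_def)

lemma tensor_apply_smash_to_lr:
  "tensor_apply \<beta> (smash_to_lr xs) = tensor_apply (\<lambda>\<phi> h. sweedler_sum sw h (\<lambda>a b. \<beta> (ract \<phi> b) a)) xs"
  unfolding tensor_apply_def smash_to_lr_def sweedler_sum_def by (simp add: sum_list_concat_map split_def o_def)

context
  fixes \<beta> :: "'a \<Rightarrow> 'h \<Rightarrow> 'k"
  assumes \<beta>: "k_bilinear scA scH (*) \<beta>"
begin

lemma k_linear_form_left: "k_linear scA (*) (\<lambda>x. \<beta> x y)"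
  using \<beta> by (simp add: k_bilinear_def)

lemma k_linear_form_right: "k_linear scH (*) (\<beta> x)"
  using \<beta> by (simp add: k_bilinear_def)

lemmas k_linear_intros_form = k_linear_intros_A k_linear_comp[OF k_linear_form_left] k_linear_comp[OF k_linear_form_right]

text \<open>In \<open>((\<phi> \<cdot> h'\<^sub>3) y) \<cdot> S(h'\<^sub>2)\<close> the right action of \<open>S(h'\<^sub>2)\<close> splits over the product, and
  \<open>h'\<^sub>3 S(h'\<^sub>2)\<close> then contracts on \<open>\<phi>\<close>, leaving \<open>\<phi> (y \<cdot> S(h'\<^sub>2))\<close>.\<close>
lemma lr_product_right_cancel:
  "sweedler_sum sw h' (\<lambda>k1 k2. sweedler_sum sw k1 (\<lambda>c1 c2. \<beta> (ract (ract \<phi> k2 * y) (S (p2 * c2))) (p1 * c1)))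
   = iter_sweedler_sum sw (Suc 0) h' (\<lambda>q. \<beta> (ract (\<phi> * ract y (S (q ! 1))) (S p2)) (p1 * q ! 0))"
proof -
  note LI = k_linear_intros_form
  have "sweedler_sum sw h' (\<lambda>k1 k2. sweedler_sum sw k1 (\<lambda>c1 c2. \<beta> (ract (ract \<phi> k2 * y) (S (p2 * c2))) (p1 * c1)))
      = iter_sweedler_sum sw (Suc 0) h' (\<lambda>q.
          sweedler_sum sw (q ! 0) (\<lambda>c1 c2. \<beta> (ract (ract \<phi> (q ! 1) * y) (S (p2 * c2))) (p1 * c1)))"
    by (simp add: iter_sweedler_sum_1)
  also have "\<dots> = iter_sweedler_sum sw (Suc (Suc 0)) h' (\<lambda>q. \<beta> (ract (ract \<phi> (q ! 2) * y) (S (p2 * q ! 1))) (p1 * q ! 0))"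
    by (rule iter_sweedler_sum_split[OF vector_space_field, where i = 0]) (auto intro!: LI simp: length_Suc_conv)
  also have "\<dots> = iter_sweedler_sum sw (Suc (Suc 0)) h' (\<lambda>q. sweedler_sum sw (q ! 1) (\<lambda>u v.
      \<beta> (ract (ract \<phi> (q ! 2 * S v) * ract y (S u)) (S p2)) (p1 * q ! 0)))"
  proof (rule iter_sweedler_sum_cong)
    fix q :: "'h list"
    have L: "k_linear scA (*) (\<lambda>x. \<beta> (ract x (S p2)) (p1 * q ! 0))" by (auto intro!: LI)
    show "\<beta> (ract (ract \<phi> (q ! 2) * y) (S (p2 * q ! 1))) (p1 * q ! 0) = sweedler_sum sw (q ! 1) (\<lambda>u v.
        \<beta> (ract (ract \<phi> (q ! 2 * S v) * ract y (S u)) (S p2)) (p1 * q ! 0))"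
      by (simp only: antipode_mult ract_mult ract_mult_antipode sweedler_sum_linear[OF L])
  qed
  also have "\<dots> = iter_sweedler_sum sw (Suc (Suc (Suc 0))) h' (\<lambda>q.
      \<beta> (ract (ract \<phi> (q ! 3 * S (q ! 2)) * ract y (S (q ! 1))) (S p2)) (p1 * q ! 0))"
    by (rule iter_sweedler_sum_split[OF vector_space_field, where i = 1]) (auto intro!: LI simp: length_Suc_conv)
  also have "\<dots> = iter_sweedler_sum sw (Suc (Suc 0)) h' (\<lambda>q.
      \<beta> (ract (ract \<phi> (scH (eps (q ! 2)) 1) * ract y (S (q ! 1))) (S p2)) (p1 * q ! 0))"
    by (rule iter_sweedler_sum_contract[OF vector_space_field _ _ _ antipode_right_swapped, where i = 2
          and W = "\<lambda>u. \<beta> (ract (ract \<phi> (u ! 2) * ract y (S (u ! 1))) (S p2)) (p1 * u ! 0)"])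
      (auto intro!: LI simp: length_Suc_conv)
  also have "\<dots> = iter_sweedler_sum sw (Suc 0) h' (\<lambda>q. \<beta> (ract (\<phi> * ract y (S (q ! 1))) (S p2)) (p1 * q ! 0))"
    by (rule iter_sweedler_sum_counit_right[OF vector_space_field, where i = 1])
      (auto intro!: LI simp: length_Suc_conv ract_scale_one k_algebra_scale_mult_left[OF k_algebra_A, symmetric]
        k_linear_scale[OF k_linear_ract] k_linear_scale[OF k_linear_form_left])
  finally show ?thesis .
qed

lemma lr_product_normal_form:
  "sweedler_sum sw h (\<lambda>h1 h2. sweedler_sum sw h' (\<lambda>k1 k2.
     sweedler_sum sw (h2 * k1) (\<lambda>a b. \<beta> (ract (ract \<phi> k2 * lact h1 \<psi>) (S b)) a)))
   = iter_sweedler_sum sw (Suc (Suc (Suc 0))) h (\<lambda>p. iter_sweedler_sum sw (Suc 0) h' (\<lambda>q.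
     \<beta> (ract \<phi> (S (p ! 3)) * ract (ract (lact (p ! 0) \<psi>) (S (q ! 1))) (S (p ! 2))) (p ! 1 * q ! 0)))"
proof -
  note LI = k_linear_intros_form
  have "sweedler_sum sw (h2 * k1) (\<lambda>a b. \<beta> (ract x (S b)) a)
      = sweedler_sum sw h2 (\<lambda>a1 a2. sweedler_sum sw k1 (\<lambda>c1 c2. \<beta> (ract x (S (a2 * c2))) (a1 * c1)))" for h2 k1 x
    by (rule sweedler_sum_mult[OF vector_space_field]) (auto intro!: LI)
  then have "sweedler_sum sw h (\<lambda>h1 h2. sweedler_sum sw h' (\<lambda>k1 k2.
      sweedler_sum sw (h2 * k1) (\<lambda>a b. \<beta> (ract (ract \<phi> k2 * lact h1 \<psi>) (S b)) a)))
    = iter_sweedler_sum sw (Suc 0) h (\<lambda>p. sweedler_sum sw (p ! 1) (\<lambda>a1 a2. sweedler_sum sw h' (\<lambda>k1 k2.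
      sweedler_sum sw k1 (\<lambda>c1 c2. \<beta> (ract (ract \<phi> k2 * lact (p ! 0) \<psi>) (S (a2 * c2))) (a1 * c1)))))"
    by (simp add: iter_sweedler_sum_1 sweedler_sum_commute[of sw h'])
  also have "\<dots> = iter_sweedler_sum sw (Suc (Suc 0)) h (\<lambda>p. sweedler_sum sw h' (\<lambda>k1 k2.
      sweedler_sum sw k1 (\<lambda>c1 c2. \<beta> (ract (ract \<phi> k2 * lact (p ! 0) \<psi>) (S (p ! 2 * c2))) (p ! 1 * c1))))"
    by (rule iter_sweedler_sum_split[OF vector_space_field, where i = 1]) (auto intro!: LI simp: length_Suc_conv)
  also have "\<dots> = iter_sweedler_sum sw (Suc (Suc 0)) h (\<lambda>p. iter_sweedler_sum sw (Suc 0) h' (\<lambda>q.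
      \<beta> (ract (\<phi> * ract (lact (p ! 0) \<psi>) (S (q ! 1))) (S (p ! 2))) (p ! 1 * q ! 0)))"
    by (intro iter_sweedler_sum_cong lr_product_right_cancel)
  also have "\<dots> = iter_sweedler_sum sw (Suc (Suc 0)) h (\<lambda>p. sweedler_sum sw (p ! 2) (\<lambda>u v.
      iter_sweedler_sum sw (Suc 0) h' (\<lambda>q.
      \<beta> (ract \<phi> (S v) * ract (ract (lact (p ! 0) \<psi>) (S (q ! 1))) (S u)) (p ! 1 * q ! 0))))"
  proof (rule iter_sweedler_sum_cong)
    fix p :: "'h list"
    have L: "k_linear scA (*) (\<lambda>x. \<beta> x c)" for c by (auto intro!: LI)
    show "iter_sweedler_sum sw (Suc 0) h' (\<lambda>q.
        \<beta> (ract (\<phi> * ract (lact (p ! 0) \<psi>) (S (q ! 1))) (S (p ! 2))) (p ! 1 * q ! 0))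
      = sweedler_sum sw (p ! 2) (\<lambda>u v. iter_sweedler_sum sw (Suc 0) h' (\<lambda>q.
        \<beta> (ract \<phi> (S v) * ract (ract (lact (p ! 0) \<psi>) (S (q ! 1))) (S u)) (p ! 1 * q ! 0)))"
      by (simp add: ract_mult_antipode sweedler_sum_linear[OF L] iter_sweedler_sum_sweedler_sum_commute)
  qed
  also have "\<dots> = iter_sweedler_sum sw (Suc (Suc (Suc 0))) h (\<lambda>p. iter_sweedler_sum sw (Suc 0) h' (\<lambda>q.
      \<beta> (ract \<phi> (S (p ! 3)) * ract (ract (lact (p ! 0) \<psi>) (S (q ! 1))) (S (p ! 2))) (p ! 1 * q ! 0)))"
    by (rule iter_sweedler_sum_split[OF vector_space_field, where i = 2]) (auto intro!: LI simp: length_Suc_conv)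
  finally show ?thesis .
qed

lemma smash_product_normal_form:
  "sweedler_sum sw h (\<lambda>a b. sweedler_sum sw h' (\<lambda>c d.
     sweedler_sum sw a (\<lambda>a1 a2. \<beta> (ract \<phi> (S b) * act a1 (ract \<psi> (S d))) (a2 * c))))
   = iter_sweedler_sum sw (Suc (Suc (Suc 0))) h (\<lambda>p. iter_sweedler_sum sw (Suc 0) h' (\<lambda>q.
     \<beta> (ract \<phi> (S (p ! 3)) * ract (ract (lact (p ! 0) \<psi>) (S (q ! 1))) (S (p ! 1))) (p ! 2 * q ! 0)))"
proof -
  note LI = k_linear_intros_form
  have L: "k_linear scA (*) (\<lambda>z. \<beta> (x * z) c)" for x c by (auto intro!: LI)
  have "sweedler_sum sw h (\<lambda>a b. sweedler_sum sw h' (\<lambda>c d.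
      sweedler_sum sw a (\<lambda>a1 a2. \<beta> (ract \<phi> (S b) * act a1 (ract \<psi> (S d))) (a2 * c))))
    = iter_sweedler_sum sw (Suc 0) h (\<lambda>p. sweedler_sum sw (p ! 0) (\<lambda>a1 a2. sweedler_sum sw h' (\<lambda>c d.
      \<beta> (ract \<phi> (S (p ! 1)) * act a1 (ract \<psi> (S d))) (a2 * c))))"
    by (simp add: iter_sweedler_sum_1 sweedler_sum_commute[of sw h'])
  also have "\<dots> = iter_sweedler_sum sw (Suc (Suc 0)) h (\<lambda>p. sweedler_sum sw h' (\<lambda>c d.
      \<beta> (ract \<phi> (S (p ! 2)) * act (p ! 0) (ract \<psi> (S d))) (p ! 1 * c)))"
    by (rule iter_sweedler_sum_split[OF vector_space_field, where i = 0])
      (auto intro!: LI simp: length_Suc_conv act_sweedler)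
  also have "\<dots> = iter_sweedler_sum sw (Suc (Suc 0)) h (\<lambda>p. sweedler_sum sw (p ! 0) (\<lambda>e f. sweedler_sum sw h' (\<lambda>c d.
      \<beta> (ract \<phi> (S (p ! 2)) * ract (ract (lact e \<psi>) (S d)) (S f)) (p ! 1 * c))))"
    by (simp only: act_sweedler ract_lact[symmetric] sweedler_sum_linear[OF L] sweedler_sum_commute[of sw h'])
  also have "\<dots> = iter_sweedler_sum sw (Suc (Suc (Suc 0))) h (\<lambda>p. sweedler_sum sw h' (\<lambda>c d.
      \<beta> (ract \<phi> (S (p ! 3)) * ract (ract (lact (p ! 0) \<psi>) (S d)) (S (p ! 1))) (p ! 2 * c)))"
    by (rule iter_sweedler_sum_split[OF vector_space_field, where i = 0]) (auto intro!: LI simp: length_Suc_conv)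
  also have "\<dots> = iter_sweedler_sum sw (Suc (Suc (Suc 0))) h (\<lambda>p. iter_sweedler_sum sw (Suc 0) h' (\<lambda>q.
      \<beta> (ract \<phi> (S (p ! 3)) * ract (ract (lact (p ! 0) \<psi>) (S (q ! 1))) (S (p ! 1))) (p ! 2 * q ! 0)))"
    by (simp add: iter_sweedler_sum_1)
  finally show ?thesis .
qed

text \<open>The two normal forms differ by exchanging \<open>h\<^sub>2\<close> and \<open>h\<^sub>3\<close>, which cocommutativity allows.\<close>
lemma lr_product_eq_smash_product:
  "sweedler_sum sw h (\<lambda>h1 h2. sweedler_sum sw h' (\<lambda>k1 k2.
     sweedler_sum sw (h2 * k1) (\<lambda>a b. \<beta> (ract (ract \<phi> k2 * lact h1 \<psi>) (S b)) a)))
   = sweedler_sum sw h (\<lambda>a b. sweedler_sum sw h' (\<lambda>c d.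
     sweedler_sum sw a (\<lambda>a1 a2. \<beta> (ract \<phi> (S b) * act a1 (ract \<psi> (S d))) (a2 * c))))"
  unfolding lr_product_normal_form smash_product_normal_form
  by (rule iter_sweedler_sum_swap[OF vector_space_field, where i = 1])
    (auto intro!: k_linear_intros_form simp: length_Suc_conv)

lemma k_bilinear_lr_to_smash_pullback:
  "k_bilinear scA scH (*) (\<lambda>\<phi> h. sweedler_sum sw h (\<lambda>a b. \<beta> (ract \<phi> (S b)) a))"
  unfolding k_bilinear_def by (auto intro!: k_linear_intros_form)

lemma k_bilinear_smash_to_lr_pullback:
  "k_bilinear scA scH (*) (\<lambda>\<phi> h. sweedler_sum sw h (\<lambda>a b. \<beta> (ract \<phi> b) a))"
  unfolding k_bilinear_def by (auto intro!: k_linear_intros_form)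

lemma tensor_apply_smash_to_lr_lr_to_smash: "tensor_apply \<beta> (smash_to_lr (lr_to_smash xs)) = tensor_apply \<beta> xs"
proof -
  note LI = k_linear_intros_form
  have "sweedler_sum sw h (\<lambda>a b. sweedler_sum sw a (\<lambda>c d. \<beta> (ract (ract \<phi> (S b)) d) c)) = \<beta> \<phi> h" for \<phi> h
  proof -
    have "sweedler_sum sw h (\<lambda>a b. sweedler_sum sw a (\<lambda>c d. \<beta> (ract (ract \<phi> (S b)) d) c))
        = iter_sweedler_sum sw (Suc 0) h (\<lambda>t. sweedler_sum sw (t ! 0) (\<lambda>c d. \<beta> (ract \<phi> (S (t ! 1) * d)) c))"
      by (simp add: iter_sweedler_sum_1 ract_mult)
    also have "\<dots> = iter_sweedler_sum sw (Suc (Suc 0)) h (\<lambda>t. \<beta> (ract \<phi> (S (t ! 2) * t ! 1)) (t ! 0))"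
      by (rule iter_sweedler_sum_split[OF vector_space_field, where i = 0]) (auto intro!: LI simp: length_Suc_conv)
    also have "\<dots> = sweedler_sum sw h (\<lambda>a b. eps b * \<beta> \<phi> a)"
      by (subst iter_sweedler_sum_contract[OF vector_space_field _ _ _ antipode_left_swapped, where i = 1
            and W = "\<lambda>u. \<beta> (ract \<phi> (u ! 1)) (u ! 0)"])
        (auto intro!: LI simp: length_Suc_conv iter_sweedler_sum_1 ract_scale_one k_linear_scale[OF k_linear_form_left])
    also have "\<dots> = \<beta> \<phi> h" by (rule counit_right_linear[OF k_linear_form_right])
    finally show ?thesis .
  qed
  then show ?thesis
    unfolding tensor_apply_lr_to_smash tensor_apply_smash_to_lr by (simp add: tensor_apply_def split_def)
qed

lemma tensor_apply_lr_to_smash_smash_to_lr: "tensor_apply \<beta> (lr_to_smash (smash_to_lr xs)) = tensor_apply \<beta> xs"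
proof -
  note LI = k_linear_intros_form
  have "sweedler_sum sw h (\<lambda>a b. sweedler_sum sw a (\<lambda>c d. \<beta> (ract (ract \<phi> b) (S d)) c)) = \<beta> \<phi> h" for \<phi> h
  proof -
    have "sweedler_sum sw h (\<lambda>a b. sweedler_sum sw a (\<lambda>c d. \<beta> (ract (ract \<phi> b) (S d)) c))
        = iter_sweedler_sum sw (Suc 0) h (\<lambda>t. sweedler_sum sw (t ! 0) (\<lambda>c d. \<beta> (ract \<phi> (t ! 1 * S d)) c))"
      by (simp add: iter_sweedler_sum_1 ract_mult)
    also have "\<dots> = iter_sweedler_sum sw (Suc (Suc 0)) h (\<lambda>t. \<beta> (ract \<phi> (t ! 2 * S (t ! 1))) (t ! 0))"
      by (rule iter_sweedler_sum_split[OF vector_space_field, where i = 0]) (auto intro!: LI simp: length_Suc_conv)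
    also have "\<dots> = sweedler_sum sw h (\<lambda>a b. eps b * \<beta> \<phi> a)"
      by (subst iter_sweedler_sum_contract[OF vector_space_field _ _ _ antipode_right_swapped, where i = 1
            and W = "\<lambda>u. \<beta> (ract \<phi> (u ! 1)) (u ! 0)"])
        (auto intro!: LI simp: length_Suc_conv iter_sweedler_sum_1 ract_scale_one k_linear_scale[OF k_linear_form_left])
    also have "\<dots> = \<beta> \<phi> h" by (rule counit_right_linear[OF k_linear_form_right])
    finally show ?thesis .
  qed
  then show ?thesis
    unfolding tensor_apply_lr_to_smash tensor_apply_smash_to_lr by (simp add: tensor_apply_def split_def)
qed

lemma tensor_apply_lr_to_smash_mult:
  "tensor_apply \<beta> (lr_to_smash (lr_smash_mult sw lact ract xs ys))
   = tensor_apply \<beta> (smash_mult sw act (lr_to_smash xs) (lr_to_smash ys))"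
proof -
  have "tensor_apply \<beta> (lr_to_smash (lr_smash_mult sw lact ract xs ys)) = sum_list (map (\<lambda>(\<phi>, h).
      sum_list (map (\<lambda>(\<psi>, h'). sweedler_sum sw h (\<lambda>h1 h2. sweedler_sum sw h' (\<lambda>k1 k2.
        sweedler_sum sw (h2 * k1) (\<lambda>a b. \<beta> (ract (ract \<phi> k2 * lact h1 \<psi>) (S b)) a)))) ys)) xs)"
    unfolding tensor_apply_lr_to_smash unfolding tensor_apply_def sweedler_sum_def lr_smash_mult_def
    by (simp add: sum_list_concat_map split_def o_def)
  also have "\<dots> = sum_list (map (\<lambda>(\<phi>, h). sum_list (map (\<lambda>(\<psi>, h'). sweedler_sum sw h (\<lambda>a b.
      sweedler_sum sw h' (\<lambda>c d. sweedler_sum sw a (\<lambda>a1 a2.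
        \<beta> (ract \<phi> (S b) * act a1 (ract \<psi> (S d))) (a2 * c))))) ys)) xs)"
    by (simp only: lr_product_eq_smash_product)
  also have "\<dots> = tensor_apply \<beta> (smash_mult sw act (lr_to_smash xs) (lr_to_smash ys))"
    unfolding tensor_apply_def sweedler_sum_def smash_mult_def lr_to_smash_def
    by (simp add: sum_list_concat_map split_def o_def sum_list_map_commute[of _ ys])
  finally show ?thesis .
qed

lemma tensor_apply_lr_to_smash_one: "tensor_apply \<beta> (lr_to_smash [(1, 1)]) = tensor_apply \<beta> [(1, 1)]"
proof -
  have "sweedler_sum sw 1 (\<lambda>a b. \<beta> (ract 1 (S b)) a) = \<beta> (ract 1 (S 1)) 1"
    by (rule sweedler_sum_one[OF vector_space_field]) (auto intro!: k_linear_intros_form)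
  then show ?thesis
    unfolding tensor_apply_lr_to_smash by (simp add: tensor_apply_def antipode_one ract_one)
qed

end

lemma tensor_alg_iso_lr_to_smash:
  "tensor_alg_iso scA scH (lr_smash_mult sw lact ract) (smash_mult sw act) lr_to_smash"
  unfolding tensor_alg_iso_def
proof (intro conjI allI impI)
  fix xs ys assume "teq2 scA scH xs ys"
  then show "teq2 scA scH (lr_to_smash xs) (lr_to_smash ys)"
    by (simp add: teq2_iff_bilinear_forms tensor_apply_lr_to_smash k_bilinear_lr_to_smash_pullback)
next
  fix xs ys show "teq2 scA scH (lr_to_smash (xs @ ys)) (lr_to_smash xs @ lr_to_smash ys)"
    by (simp add: lr_to_smash_def teq2_refl)
next
  fix c xs
  have "lr_to_smash (map (\<lambda>(a, h). (scA c a, h)) xs) = map (\<lambda>(a, h). (scA c a, h)) (lr_to_smash xs)"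
    by (simp add: lr_to_smash_def map_concat split_def o_def k_linear_scale[OF k_linear_ract])
  then show "teq2 scA scH (lr_to_smash (map (\<lambda>(a, h). (scA c a, h)) xs)) (map (\<lambda>(a, h). (scA c a, h)) (lr_to_smash xs))"
    by (simp add: teq2_refl)
next
  fix xs ys assume "teq2 scA scH (lr_to_smash xs) (lr_to_smash ys)"
  then have "tensor_apply \<beta> (smash_to_lr (lr_to_smash xs)) = tensor_apply \<beta> (smash_to_lr (lr_to_smash ys))"
    if "k_bilinear scA scH (*) \<beta>" for \<beta>
    using that by (simp add: teq2_iff_bilinear_forms tensor_apply_smash_to_lr k_bilinear_smash_to_lr_pullback)
  then show "teq2 scA scH xs ys"
    by (simp add: teq2_iff_bilinear_forms tensor_apply_smash_to_lr_lr_to_smash)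
next
  fix ys show "\<exists>xs. teq2 scA scH (lr_to_smash xs) ys"
    by (rule exI[of _ "smash_to_lr ys"]) (simp add: teq2_iff_bilinear_forms tensor_apply_lr_to_smash_smash_to_lr)
next
  fix xs ys
  show "teq2 scA scH (lr_to_smash (lr_smash_mult sw lact ract xs ys)) (smash_mult sw act (lr_to_smash xs) (lr_to_smash ys))"
    by (simp add: teq2_iff_bilinear_forms tensor_apply_lr_to_smash_mult)
next
  show "teq2 scA scH (lr_to_smash [(1, 1)]) [(1, 1)]"
    by (simp add: teq2_iff_bilinear_forms tensor_apply_lr_to_smash_one)
qed

end

theorem proposition3p1:
  fixes scH :: "'k::field \<Rightarrow> 'h::ring_1 \<Rightarrow> 'h"
    and sw :: "'h \<Rightarrow> ('h \<times> 'h) list"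
    and eps :: "'h \<Rightarrow> 'k"
    and S :: "'h \<Rightarrow> 'h"
    and scA :: "'k \<Rightarrow> 'a::ring_1 \<Rightarrow> 'a"
    and lact :: "'h \<Rightarrow> 'a \<Rightarrow> 'a"
    and ract :: "'a \<Rightarrow> 'h \<Rightarrow> 'a"
  assumes "hopf_algebra scH sw eps S"
    and "cocommutative scH sw"
    and "bimodule_algebra scH sw eps scA lact ract"
  shows "left_module_algebra scH sw eps scA (conj_action sw S lact ract)
         \<and> (\<exists>\<Phi>. tensor_alg_iso scA scH (lr_smash_mult sw lact ract)
                   (smash_mult sw (conj_action sw S lact ract)) \<Phi>)"
proof -
  interpret cocommutative_hopf_bimodule scH sw eps S scA lact ract
    using assms by unfold_locales
  show ?thesis using left_module_algebra_act tensor_alg_iso_lr_to_smash by blast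
qed

end
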